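(* Let $d$ and $m$ be positive integers. Then $$\operatorname{CI}(W(d,m))=\operatorname{CI}(\operatorname{Sym}(d))\big(\operatorname{CI}^{(1)}(\operatorname{Hol}(\mathbb{Z}/m\mathbb{Z})),\dots,\operatorname{CI}^{(d)}(\operatorname{Hol}(\mathbb{Z}/m\mathbb{Z}))\big),$$ i.e. the polynomial $\operatorname{CI}(\operatorname{Sym}(d))\in\mathbb{Q}[x_1,\dots,x_d]$ evaluated at $x_j=\operatorname{CI}^{(j)}(\operatorname{Hol}(\mathbb{Z}/m\mathbb{Z}))$. In particular, if $q$ is a prime power with $d\mid q-1$, then $\operatorname{CI}(\operatorname{GCP}(d,q))$ is given by the same formula with $m=\frac{q-1}{d}$.
   Context: For a permutation $h$ of an $n$-element set, $\operatorname{CT}(h)=x_1^{k_1}\cdots x_n^{k_n}$ with $k_i$ the number of $i$-cycles; $\operatorname{CI}(G)=\frac1{|G|}\sum_{g\in G}\operatorname{CT}(g)$ for a finite permutation group $G$, and $\operatorname{CI}^{(j)}(G)$ is obtained from $\operatorname{CI}(G)$ by substituting $x_i\mapsto x_{ij}$ for all $i$. $\operatorname{Hol}(\mathbb{Z}/m\mathbb{Z})$ is the permutation group on $\mathbb{Z}/m\mathbb{Z}$ of maps $\lambda(a,b):x\mapsto ax+b$, $a$ a unit. $\operatorname{Sym}(d)$ is the symmetric group on $\{0,\dots,d-1\}$. $W(d,m)=\operatorname{Hol}(\mathbb{Z}/m\mathbb{Z})\wr_{\mathrm{imp}}\operatorname{Sym}(d)$, the permutation group on $\mathbb{Z}/m\mathbb{Z}\times\{0,\dots,d-1\}$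 of pairs $(\sigma,(g_0,\dots,g_{d-1}))$ ($\sigma\in\operatorname{Sym}(d)$, $g_i\in\operatorname{Hol}(\mathbb{Z}/m\mathbb{Z})$) acting by $(x,i)\mapsto(g_{\sigma(i)}(x),\sigma(i))$. $\operatorname{GCP}(d,q)$ is the permutation group on $\mathbb{F}_q^{\ast}$ of restrictions of those maps $\mathbb{F}_q\to\mathbb{F}_q$ that are permutations and are of the form $0\mapsto0$, $x\mapsto a_ix^{r_i}$ for $x\in\omega^iC$ ($i=0,\dots,d-1$), where $\omega$ is a primitive root, $C$ the index $d$ subgroup of $\mathbb{F}_q^{\ast}$, $a_i\in\mathbb{F}_q$, $r_i\in\{1,\dots,\frac{q-1}{d}\}$. *)

theory Defs
  imports Complex_Main "HOL-Library.Poly_Mapping" "HOL-Combinatorics.Permutations" "HOL-Computational_Algebra.Primes"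
begin

type_synonym mpoly = "(nat \<Rightarrow>\<^sub>0 nat) \<Rightarrow>\<^sub>0 rat"

definition var :: "nat \<Rightarrow> mpoly" where
  "var i = Poly_Mapping.single (Poly_Mapping.single i 1) 1"

definition const :: "rat \<Rightarrow> mpoly" where
  "const c = Poly_Mapping.single 0 c"

definition monom_eval :: "(nat \<Rightarrow>\<^sub>0 nat) \<Rightarrow> (nat \<Rightarrow> mpoly) \<Rightarrow> mpoly" where
  "monom_eval e Q = (\<Prod>i\<in>Poly_Mapping.keys e. Q i ^ Poly_Mapping.lookup e i)"

definition subst :: "mpoly \<Rightarrow> (nat \<Rightarrow> mpoly) \<Rightarrow> mpoly" where
  "subst P Q = (\<Sum>e\<in>Poly_Mapping.keys P. const (Poly_Mapping.lookup P e) * monom_eval e Q)"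

definition CI_pow :: "nat \<Rightarrow> mpoly \<Rightarrow> mpoly" where
  "CI_pow j P = subst P (\<lambda>i. var (i * j))"

definition orbit_of :: "('a \<Rightarrow> 'a) \<Rightarrow> 'a \<Rightarrow> 'a set" where
  "orbit_of h x = range (\<lambda>k. (h ^^ k) x)"

definition ncycles :: "'a set \<Rightarrow> ('a \<Rightarrow> 'a) \<Rightarrow> nat \<Rightarrow> nat" where
  "ncycles S h i = card {orbit_of h x | x. x \<in> S \<and> card (orbit_of h x) = i}"

definition CT :: "'a set \<Rightarrow> ('a \<Rightarrow> 'a) \<Rightarrow> mpoly" where
  "CT S h = (\<Prod>i\<in>{1..card S}. var i ^ ncycles S h i)"

text \<open>Cycle index of a finite permutation group G on S (elements given as
  functions which are the identity outside S).\<close>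
definition CI :: "'a set \<Rightarrow> ('a \<Rightarrow> 'a) set \<Rightarrow> mpoly" where
  "CI S G = const (1 / of_nat (card G)) * (\<Sum>g\<in>G. CT S g)"

definition Sym :: "nat \<Rightarrow> (nat \<Rightarrow> nat) set" where
  "Sym d = {\<sigma>. \<sigma> permutes {0..<d}}"

definition hol_map :: "nat \<Rightarrow> nat \<Rightarrow> nat \<Rightarrow> nat \<Rightarrow> nat" where
  "hol_map m a b = (\<lambda>x. if x < m then (a * x + b) mod m else x)"

definition Hol :: "nat \<Rightarrow> (nat \<Rightarrow> nat) set" where
  "Hol m = {hol_map m a b | a b. a < m \<and> b < m \<and> coprime a m}"

definition W_carrier :: "nat \<Rightarrow> nat \<Rightarrow> (nat \<times> nat) set" where
  "W_carrier d m = {0..<m} \<times> {0..<d}"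

definition W :: "nat \<Rightarrow> nat \<Rightarrow> (nat \<times> nat \<Rightarrow> nat \<times> nat) set" where
  "W d m = {(\<lambda>(x, i). if (x, i) \<in> W_carrier d m then (g (\<sigma> i) x, \<sigma> i) else (x, i))
            | \<sigma> g. \<sigma> \<in> Sym d \<and> (\<forall>j<d. g j \<in> Hol m)}"

definition primitive_root :: "'a::{finite,field} \<Rightarrow> bool" where
  "primitive_root \<omega> \<longleftrightarrow> \<omega> \<noteq> 0 \<and> (\<forall>x. x \<noteq> 0 \<longrightarrow> (\<exists>k::nat. x = \<omega> ^ k))"

text \<open>The subgroup of index d of F_q^* (for d dividing q-1): the d-th powers.\<close>
definition index_subgroup :: "nat \<Rightarrow> 'a::{finite,field} set" where
  "index_subgroup d = {x ^ d | x. x \<noteq> 0}"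

definition GCP :: "nat \<Rightarrow> 'a::{finite,field} \<Rightarrow> ('a \<Rightarrow> 'a) set" where
  "GCP d \<omega> = {f. bij f \<and> f 0 = 0 \<and>
     (\<exists>a r. (\<forall>i<d. r i \<in> {1..(card (UNIV :: 'a set) - 1) div d}) \<and>
            (\<forall>i<d. \<forall>c\<in>index_subgroup d. f (\<omega> ^ i * c) = a i * (\<omega> ^ i * c) ^ r i))}"

end

theory Submission
  imports Defs "HOL-Number_Theory.Cong"
begin

text \<open>
  An element of \<open>W(d, m)\<close> is a top permutation \<open>\<sigma> \<in> Sym(d)\<close> with base maps \<open>g\<^sub>0, \<dots>, g\<^sub>d\<^sub>-\<^sub>1\<close>
  in \<open>Hol(\<int>/m\<int>)\<close>. Over a \<open>\<sigma>\<close>-cycle of length \<open>l\<close> it acts like the cycle product \<open>h\<close> of the base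
  maps along the cycle, stretched by \<open>l\<close>: every \<open>k\<close>-cycle of \<open>h\<close> yields a \<open>kl\<close>-cycle, so that block
  contributes \<open>CT(h)\<close> with \<open>x\<^sub>k\<close> replaced by \<open>x\<^sub>k\<^sub>l\<close>. Replacing the base map at one point of each
  \<open>\<sigma>\<close>-cycle by the cycle product is a bijection of \<open>Hol(\<int>/m\<int>)\<^sup>d\<close>, so for fixed \<open>\<sigma>\<close> the sum over
  the base maps factors over the cycles of \<open>\<sigma>\<close>, each cycle of length \<open>l\<close> contributing
  \<open>|Hol| \<cdot> CI\<^sup>(\<^sup>l\<^sup>)(Hol)\<close>. Averaging over \<open>\<sigma>\<close> gives the formula.

  For \<open>GCP(d, q)\<close>, the coordinates \<open>(k, i) \<mapsto> \<omega>\<^sup>i\<^sup>+\<^sup>d\<^sup>k\<close> identify \<open>\<int>/m\<int> \<times> {0..<d}\<close> with \<open>\<bbbF>\<^sub>q\<^sup>*\<close>,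
  and conjugation by them maps \<open>W(d, m)\<close> bijectively onto \<open>GCP(d, q)\<close>, preserving cycle types.
\<close>

section \<open>Substitution into polynomials\<close>

lemma const_add: "const (a + b) = const a + const b"
  by (simp add: const_def single_add)

lemma const_mult: "const (a * b) = const a * const b"
  by (simp add: const_def mult_single)

lemma const_0 [simp]: "const 0 = 0"
  by (simp add: const_def)

lemma const_1 [simp]: "const 1 = 1"
  by (simp add: const_def)

lemma const_of_nat: "const (of_nat n) = of_nat n"
  by (simp add: const_def)

lemma const_inverse_of_nat_mult: "n > 0 \<Longrightarrow> const (1 / of_nat n) * of_nat n = 1"
  by (simp flip: const_of_nat const_mult)

lemma monom_eval_eq_prod_superset:
  assumes "finite K" "Poly_Mapping.keys e \<subseteq> K"
  shows "monom_eval e Q = (\<Prod>i\<in>K. Q i ^ Poly_Mapping.lookup e i)"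
  unfolding monom_eval_def
  by (rule prod.mono_neutral_left) (use assms in \<open>auto simp: in_keys_iff\<close>)

lemma monom_eval_0 [simp]: "monom_eval 0 Q = 1"
  by (simp add: monom_eval_def)

lemma monom_eval_add: "monom_eval (a + b) Q = monom_eval a Q * monom_eval b Q"
proof -
  let ?K = "Poly_Mapping.keys a \<union> Poly_Mapping.keys b"
  have "monom_eval (a + b) Q = (\<Prod>i\<in>?K. Q i ^ Poly_Mapping.lookup (a + b) i)"
    by (rule monom_eval_eq_prod_superset) (auto simp: keys_add)
  also have "\<dots> = (\<Prod>i\<in>?K. Q i ^ Poly_Mapping.lookup a i) * (\<Prod>i\<in>?K. Q i ^ Poly_Mapping.lookup b i)"
    by (simp add: lookup_add power_add prod.distrib)
  also have "\<dots> = monom_eval a Q * monom_eval b Q"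
    by (subst (1 2) monom_eval_eq_prod_superset[where K = ?K]) auto
  finally show ?thesis .
qed

lemma monom_eval_single: "monom_eval (Poly_Mapping.single i n) Q = Q i ^ n"
  by (cases "n = 0") (auto simp: monom_eval_def)

lemma subst_eq_sum_superset:
  assumes "finite K" "Poly_Mapping.keys P \<subseteq> K"
  shows "subst P Q = (\<Sum>e\<in>K. const (Poly_Mapping.lookup P e) * monom_eval e Q)"
  unfolding subst_def
  by (rule sum.mono_neutral_left) (use assms in \<open>auto simp: in_keys_iff\<close>)

lemma subst_0 [simp]: "subst 0 Q = 0"
  by (simp add: subst_def)

lemma subst_add: "subst (P + R) Q = subst P Q + subst R Q"
proof -
  let ?K = "Poly_Mapping.keys P \<union> Poly_Mapping.keys R"
  have "subst (P + R) Q = (\<Sum>e\<in>?K. const (Poly_Mapping.lookup (P + R) e) * monom_eval e Q)"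
    by (rule subst_eq_sum_superset) (auto simp: keys_add)
  also have "\<dots> = (\<Sum>e\<in>?K. const (Poly_Mapping.lookup P e) * monom_eval e Q)
                + (\<Sum>e\<in>?K. const (Poly_Mapping.lookup R e) * monom_eval e Q)"
    by (simp add: lookup_add const_add distrib_right sum.distrib)
  also have "\<dots> = subst P Q + subst R Q"
    by (subst (1 2) subst_eq_sum_superset[where K = ?K]) auto
  finally show ?thesis .
qed

lemma subst_sum: "subst (sum f A) Q = (\<Sum>x\<in>A. subst (f x) Q)"
  by (induction A rule: infinite_finite_induct) (auto simp: subst_add)

lemma subst_single: "subst (Poly_Mapping.single e c) Q = const c * monom_eval e Q"
  by (cases "c = 0") (auto simp: subst_def)

lemma mpoly_eq_sum_single:
  "(P :: mpoly) = (\<Sum>e\<in>Poly_Mapping.keys P. Poly_Mapping.single e (Poly_Mapping.lookup P e))"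
  by (rule poly_mapping_eqI)
    (auto simp: lookup_sum lookup_single when_def in_keys_iff intro: sum.neutral)

lemma subst_mult: "subst (P * R) Q = subst P Q * subst R Q"
proof -
  have "P * R = (\<Sum>a\<in>Poly_Mapping.keys P. \<Sum>b\<in>Poly_Mapping.keys R.
           Poly_Mapping.single (a + b) (Poly_Mapping.lookup P a * Poly_Mapping.lookup R b))"
    by (subst mpoly_eq_sum_single[of P], subst mpoly_eq_sum_single[of R])
      (simp add: sum_distrib_left sum_distrib_right mult_single sum.swap[of _ "Poly_Mapping.keys R"])
  then have "subst (P * R) Q = (\<Sum>a\<in>Poly_Mapping.keys P. \<Sum>b\<in>Poly_Mapping.keys R.
       (const (Poly_Mapping.lookup P a) * monom_eval a Q) * (const (Poly_Mapping.lookup R b) * monom_eval b Q))"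
    by (simp add: subst_sum subst_single const_mult monom_eval_add mult_ac)
  also have "\<dots> = subst P Q * subst R Q"
    by (simp add: subst_def sum_distrib_left sum_distrib_right sum.swap[of _ "Poly_Mapping.keys R"])
  finally show ?thesis .
qed

lemma subst_const [simp]: "subst (const c) Q = const c"
  by (simp add: const_def subst_single)

lemma subst_1 [simp]: "subst 1 Q = 1"
  using subst_const[of 1 Q] by simp

lemma subst_var [simp]: "subst (var i) Q = Q i"
  by (simp add: var_def subst_single monom_eval_single)

lemma subst_prod: "subst (prod f A) Q = (\<Prod>x\<in>A. subst (f x) Q)"
  by (induction A rule: infinite_finite_induct) (auto simp: subst_mult)

lemma subst_power: "subst (P ^ n) Q = subst P Q ^ n"
  by (induction n) (auto simp: subst_mult)

lemma subst_CT: "subst (CT S h) Q = (\<Prod>i\<in>{1..card S}. Q i ^ ncycles S h i)"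
  by (simp add: CT_def subst_prod subst_power)

lemma CI_pow_sum: "CI_pow j (sum f A) = (\<Sum>x\<in>A. CI_pow j (f x))"
  by (simp add: CI_pow_def subst_sum)

lemma CI_pow_mult: "CI_pow j (P * R) = CI_pow j P * CI_pow j R"
  by (simp add: CI_pow_def subst_mult)

lemma CI_pow_const [simp]: "CI_pow j (const c) = const c"
  by (simp add: CI_pow_def)

lemma CI_pow_CT: "CI_pow j (CT S h) = (\<Prod>i\<in>{1..card S}. var (i * j) ^ ncycles S h i)"
  by (simp add: CI_pow_def subst_CT)

lemma sum_CI_pow_CT:
  assumes "finite G" "G \<noteq> {}"
  shows "(\<Sum>g\<in>G. CI_pow j (CT S g)) = of_nat (card G) * CI_pow j (CI S G)"
proof -
  have "of_nat (card G) * CI_pow j (CI S G) = (const (1 / of_nat (card G)) * of_nat (card G)) * (\<Sum>g\<in>G. CI_pow j (CT S g))"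
    by (simp add: CI_def CI_pow_mult CI_pow_sum mult_ac)
  then show ?thesis
    using assms by (simp add: const_inverse_of_nat_mult card_gt_0_iff)
qed

section \<open>Cycles of a permutation of a finite set\<close>

lemma funpow_add_apply: "(f ^^ m) ((f ^^ n) x) = (f ^^ (m + n)) x"
  by (simp add: funpow_add)

lemma orbit_funpow_subset: "orbit_of f ((f ^^ n) x) \<subseteq> orbit_of f x"
  by (auto simp: orbit_of_def funpow_add_apply)

locale perm_on =
  fixes S :: "'a set" and h :: "'a \<Rightarrow> 'a"
  assumes fin: "finite S" and maps: "\<And>x. x \<in> S \<Longrightarrow> h x \<in> S" and inj: "inj_on h S"
begin

lemma funpow_in: "x \<in> S \<Longrightarrow> (h ^^ n) x \<in> S"
  by (induction n) (auto simp: maps)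

lemma funpow_eq_cancel: "x \<in> S \<Longrightarrow> y \<in> S \<Longrightarrow> (h ^^ n) x = (h ^^ n) y \<Longrightarrow> x = y"
  by (induction n) (auto dest: inj_onD[OF inj] simp: funpow_in)

lemma orbit_subset: "x \<in> S \<Longrightarrow> orbit_of h x \<subseteq> S"
  by (auto simp: orbit_of_def funpow_in)

lemma self_in_orbit: "x \<in> orbit_of h x"
  unfolding orbit_of_def by (metis funpow_0 rangeI)

lemma finite_orbit: "x \<in> S \<Longrightarrow> finite (orbit_of h x)"
  using orbit_subset fin finite_subset by blast

lemma card_orbit_pos: "x \<in> S \<Longrightarrow> card (orbit_of h x) > 0"
  using finite_orbit self_in_orbit card_gt_0_iff by blast

lemma funpow_diff_fixed:
  assumes "x \<in> S" "i < j" "(h ^^ i) x = (h ^^ j) x"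
  shows "(h ^^ (j - i)) x = x"
proof -
  have "(h ^^ j) x = (h ^^ i) ((h ^^ (j - i)) x)"
    using assms(2) by (simp add: funpow_add_apply)
  then show ?thesis
    using assms funpow_eq_cancel funpow_in by metis
qed

lemma exists_period: assumes "x \<in> S" shows "\<exists>p>0. (h ^^ p) x = x"
proof -
  have "\<not> inj_on (\<lambda>n. (h ^^ n) x) {0..card S}"
  proof
    assume inj: "inj_on (\<lambda>n. (h ^^ n) x) {0..card S}"
    have "(\<lambda>n. (h ^^ n) x) ` {0..card S} \<subseteq> S"
      using assms funpow_in by auto
    from card_mono[OF fin this] card_image[OF inj] show False
      by simp
  qed
  then obtain i j where "i < j" "(h ^^ i) x = (h ^^ j) x"
    unfolding inj_on_def by (metis linorder_neqE_nat)
  then show ?thesis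
    using funpow_diff_fixed[OF assms] by (intro exI[of _ "j - i"]) auto
qed

definition period :: "'a \<Rightarrow> nat" where
  "period x = (LEAST p. p > 0 \<and> (h ^^ p) x = x)"

lemma period_pos: "x \<in> S \<Longrightarrow> period x > 0"
  and funpow_period: "x \<in> S \<Longrightarrow> (h ^^ period x) x = x"
  using LeastI_ex[OF exists_period] unfolding period_def by auto

lemma funpow_less_period: "0 < q \<Longrightarrow> q < period x \<Longrightarrow> (h ^^ q) x \<noteq> x"
  unfolding period_def using not_less_Least by blast

lemma funpow_mod_period: assumes "x \<in> S" shows "(h ^^ n) x = (h ^^ (n mod period x)) x"
proof -
  have "(h ^^ (period x * k)) x = x" for k
    by (induction k) (auto simp: funpow_add funpow_period[OF assms] simp del: funpow.simps)
  then show ?thesis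
    by (metis comp_apply funpow_add mod_mult_div_eq mult.commute)
qed

lemma inj_on_funpow_less_period: assumes "x \<in> S" shows "inj_on (\<lambda>n. (h ^^ n) x) {0..<period x}"
proof -
  have False if "i < j" "j < period x" "(h ^^ i) x = (h ^^ j) x" for i j
    using funpow_diff_fixed[OF assms that(1,3)] funpow_less_period[of "j - i" x] that by simp
  then show ?thesis
    by (intro inj_onI) (metis atLeastLessThan_iff linorder_neqE_nat)
qed

lemma orbit_eq_funpow_image: assumes "x \<in> S" shows "orbit_of h x = (\<lambda>n. (h ^^ n) x) ` {0..<period x}"
proof -
  have "(h ^^ k) x \<in> (\<lambda>n. (h ^^ n) x) ` {0..<period x}" for k
    using funpow_mod_period[OF assms, of k] period_pos[OF assms] by auto
  then show ?thesis
    unfolding orbit_of_def by auto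
qed

lemma card_orbit: "x \<in> S \<Longrightarrow> card (orbit_of h x) = period x"
  using card_image[OF inj_on_funpow_less_period] orbit_eq_funpow_image by simp

lemma funpow_eq_self_iff:
  assumes "x \<in> S"
  shows "(h ^^ n) x = x \<longleftrightarrow> card (orbit_of h x) dvd n"
proof -
  have "(h ^^ n) x = x \<longleftrightarrow> (h ^^ (n mod period x)) x = (h ^^ 0) x"
    using funpow_mod_period[OF assms] by simp
  also have "\<dots> \<longleftrightarrow> n mod period x = 0"
    using inj_onD[OF inj_on_funpow_less_period[OF assms]] period_pos[OF assms] by force
  finally show ?thesis
    by (simp add: card_orbit[OF assms] dvd_eq_mod_eq_0)
qed

lemma orbit_eq:
  assumes "x \<in> S" "y \<in> orbit_of h x"
  shows "orbit_of h y = orbit_of h x"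
proof -
  obtain k where k: "y = (h ^^ k) x"
    using assms(2) unfolding orbit_of_def by auto
  let ?c = "card (orbit_of h x)"
  have "k \<le> ?c * k"
    using card_orbit_pos[OF assms(1)] by simp
  then have "(h ^^ (?c * k - k)) y = (h ^^ (?c * k)) x"
    by (simp add: k funpow_add_apply)
  also have "\<dots> = x"
    using funpow_eq_self_iff[OF assms(1)] by simp
  finally have "x \<in> orbit_of h y"
    unfolding orbit_of_def by (metis rangeI)
  then obtain j where j: "x = (h ^^ j) y"
    unfolding orbit_of_def by auto
  show ?thesis
    using orbit_funpow_subset[of h k x] orbit_funpow_subset[of h j y] by (simp flip: j k)
qed

lemma orbit_funpow: "x \<in> S \<Longrightarrow> orbit_of h ((h ^^ n) x) = orbit_of h x"
  by (rule orbit_eq) (auto simp: orbit_of_def)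

lemma orbits_disjoint:
  assumes "x \<in> S" "y \<in> S" "orbit_of h x \<noteq> orbit_of h y"
  shows "orbit_of h x \<inter> orbit_of h y = {}"
  using orbit_eq[OF assms(1)] orbit_eq[OF assms(2)] assms(3) by blast

lemma ncycles_mult_eq_card: "ncycles S h i * i = card {x \<in> S. card (orbit_of h x) = i}"
proof -
  define Orbs where "Orbs = {orbit_of h x | x. x \<in> S \<and> card (orbit_of h x) = i}"
  have "{x \<in> S. card (orbit_of h x) = i} \<subseteq> \<Union> Orbs"
    unfolding Orbs_def using self_in_orbit by blast
  moreover have "\<Union> Orbs \<subseteq> {x \<in> S. card (orbit_of h x) = i}"
  proof
    fix z assume "z \<in> \<Union> Orbs"
    then obtain x where x: "x \<in> S" "card (orbit_of h x) = i" "z \<in> orbit_of h x"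
      unfolding Orbs_def by blast
    then show "z \<in> {x \<in> S. card (orbit_of h x) = i}"
      using orbit_subset[OF x(1)] orbit_eq[OF x(1,3)] by auto
  qed
  moreover have "card (\<Union> Orbs) = (\<Sum>A\<in>Orbs. card A)"
  proof (rule card_Union_disjoint)
    show "pairwise disjnt Orbs"
      unfolding Orbs_def pairwise_def disjnt_def using orbits_disjoint by blast
  qed (auto simp: Orbs_def finite_orbit)
  moreover have "(\<Sum>A\<in>Orbs. card A) = (\<Sum>A\<in>Orbs. i)"
    by (rule sum.cong) (auto simp: Orbs_def)
  ultimately show ?thesis
    by (simp add: ncycles_def Orbs_def)
qed

lemma ncycles_eq_0: assumes "i > card S" shows "ncycles S h i = 0"
proof -
  have "card (orbit_of h x) \<le> card S" if "x \<in> S" for x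
    using card_mono[OF fin orbit_subset[OF that]] .
  then have "{orbit_of h x | x. x \<in> S \<and> card (orbit_of h x) = i} = {}"
    using assms by fastforce
  then show ?thesis
    unfolding ncycles_def by (metis card.empty)
qed

lemma CT_eq_prod_superset:
  assumes "card S \<le> N"
  shows "CT S h = (\<Prod>i\<in>{1..N}. var i ^ ncycles S h i)"
  unfolding CT_def by (rule prod.mono_neutral_left) (use assms ncycles_eq_0 in auto)

end

lemma perm_on_permutes: "finite S \<Longrightarrow> h permutes S \<Longrightarrow> perm_on S h"
  by unfold_locales (auto simp: permutes_in_image permutes_inj_on)

lemma ncycles_conj:
  assumes "perm_on S h" "bij_betw \<phi> S T" "\<And>x. x \<in> S \<Longrightarrow> \<phi> (h x) = h' (\<phi> x)"
  shows "ncycles T h' i = ncycles S h i"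
proof -
  interpret perm_on S h by fact
  have "\<phi> ((h ^^ n) x) = (h' ^^ n) (\<phi> x)" if "x \<in> S" for x n
    using that by (induction n) (auto simp: assms(3) funpow_in)
  then have orb: "orbit_of h' (\<phi> x) = \<phi> ` orbit_of h x" if "x \<in> S" for x
    using that unfolding orbit_of_def image_image by simp
  have inj\<phi>: "inj_on \<phi> S"
    using assms(2) bij_betw_def by blast
  have card_orb: "card (orbit_of h' (\<phi> x)) = card (orbit_of h x)" if "x \<in> S" for x
    unfolding orb[OF that] by (rule card_image[OF inj_on_subset[OF inj\<phi> orbit_subset[OF that]]])
  have T: "T = \<phi> ` S"
    using assms(2) by (simp add: bij_betw_def)
  define OS where "OS = {orbit_of h x | x. x \<in> S \<and> card (orbit_of h x) = i}"
  have "{orbit_of h' y | y. y \<in> T \<and> card (orbit_of h' y) = i} = image \<phi> ` OS"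
  proof (intro equalityI subsetI)
    fix A assume "A \<in> {orbit_of h' y | y. y \<in> T \<and> card (orbit_of h' y) = i}"
    then obtain x where "x \<in> S" "card (orbit_of h' (\<phi> x)) = i" "A = orbit_of h' (\<phi> x)"
      unfolding T by blast
    then show "A \<in> image \<phi> ` OS"
      unfolding OS_def using orb card_orb by auto
  next
    fix A assume "A \<in> image \<phi> ` OS"
    then obtain x where x: "x \<in> S" "card (orbit_of h x) = i" "A = \<phi> ` orbit_of h x"
      unfolding OS_def by blast
    then have "\<phi> x \<in> T" "A = orbit_of h' (\<phi> x)" "card (orbit_of h' (\<phi> x)) = i"
      using T orb[OF x(1)] card_orb[OF x(1)] by auto
    then show "A \<in> {orbit_of h' y | y. y \<in> T \<and> card (orbit_of h' y) = i}"
      by blast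
  qed
  moreover have "inj_on (image \<phi>) OS"
    by (rule inj_on_image, rule inj_on_subset[OF inj\<phi>]) (use orbit_subset in \<open>auto simp: OS_def\<close>)
  ultimately show ?thesis
    unfolding ncycles_def OS_def by (simp add: card_image)
qed

lemma CT_conj:
  assumes "perm_on S h" "bij_betw \<phi> S T" "\<And>x. x \<in> S \<Longrightarrow> \<phi> (h x) = h' (\<phi> x)"
  shows "CT T h' = CT S h"
  unfolding CT_def using ncycles_conj[OF assms] bij_betw_same_card[OF assms(2)] by simp

lemma perm_on_Union:
  assumes "finite F" and perm: "\<And>A. A \<in> F \<Longrightarrow> perm_on A h" and disj: "pairwise disjnt F"
  shows "perm_on (\<Union>F) h"
proof
  show "finite (\<Union>F)"
    using assms(1) perm perm_on.fin by (intro finite_Union) blast+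
  show "h x \<in> \<Union>F" if x: "x \<in> \<Union>F" for x
  proof -
    obtain A where "A \<in> F" "x \<in> A"
      using x by blast
    then show ?thesis
      using perm_on.maps[OF perm[OF \<open>A \<in> F\<close>]] by blast
  qed
  show "inj_on h (\<Union>F)"
  proof (rule inj_onI)
    fix x y assume xy: "x \<in> \<Union>F" "y \<in> \<Union>F" "h x = h y"
    then obtain A B where AB: "A \<in> F" "B \<in> F" "x \<in> A" "y \<in> B"
      by blast
    have "h x \<in> A" "h y \<in> B"
      using AB perm_on.maps[OF perm[OF AB(1)]] perm_on.maps[OF perm[OF AB(2)]] by auto
    then have "A = B"
      using disj AB(1,2) xy(3) unfolding pairwise_def disjnt_def by auto
    then show "x = y"
      using inj_onD[OF perm_on.inj[OF perm[OF AB(1)]]] xy(3) AB by blast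
  qed
qed

lemma ncycles_Union:
  assumes "finite F" and disj: "pairwise disjnt F" and perm: "\<And>A. A \<in> F \<Longrightarrow> perm_on A h"
  shows "ncycles (\<Union>F) h i = (\<Sum>A\<in>F. ncycles A h i)"
proof -
  let ?O = "\<lambda>A. {orbit_of h x | x. x \<in> A \<and> card (orbit_of h x) = i}"
  have "?O (\<Union>F) = (\<Union>A\<in>F. ?O A)"
    by blast
  moreover have "card (\<Union>A\<in>F. ?O A) = (\<Sum>A\<in>F. card (?O A))"
  proof (rule card_UN_disjoint[OF assms(1)])
    show "\<forall>A\<in>F. finite (?O A)"
      using perm_on.fin[OF perm] by simp
    show "\<forall>A\<in>F. \<forall>B\<in>F. A \<noteq> B \<longrightarrow> ?O A \<inter> ?O B = {}"
    proof (intro ballI impI)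
      fix A B assume AB: "A \<in> F" "B \<in> F" "A \<noteq> B"
      show "?O A \<inter> ?O B = {}"
      proof (rule ccontr)
        assume "?O A \<inter> ?O B \<noteq> {}"
        then obtain x y where xy: "x \<in> A" "y \<in> B" "orbit_of h x = orbit_of h y"
          by blast
        then have "x \<in> B"
          using perm_on.self_in_orbit[OF perm[OF AB(1)], of x] perm_on.orbit_subset[OF perm[OF AB(2)]]
          by blast
        then show False
          using xy(1) disj AB unfolding pairwise_def disjnt_def by blast
      qed
    qed
  qed
  ultimately show ?thesis
    unfolding ncycles_def by simp
qed

lemma CT_Union:
  assumes "finite F" and "pairwise disjnt F" and perm: "\<And>A. A \<in> F \<Longrightarrow> perm_on A h"
  shows "CT (\<Union>F) h = (\<Prod>A\<in>F. CT A h)"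
proof -
  let ?N = "card (\<Union>F)"
  interpret U: perm_on "\<Union>F" h
    by (rule perm_on_Union) fact+
  have "CT (\<Union>F) h = (\<Prod>i\<in>{1..?N}. var i ^ (\<Sum>A\<in>F. ncycles A h i))"
    by (simp add: CT_def ncycles_Union[OF assms])
  also have "\<dots> = (\<Prod>A\<in>F. \<Prod>i\<in>{1..?N}. var i ^ ncycles A h i)"
    unfolding power_sum by (rule prod.swap)
  also have "\<dots> = (\<Prod>A\<in>F. CT A h)"
  proof (rule prod.cong[OF refl])
    fix A assume "A \<in> F"
    then have "card A \<le> ?N"
      using U.fin by (intro card_mono) auto
    then show "(\<Prod>i\<in>{1..?N}. var i ^ ncycles A h i) = CT A h"
      using perm_on.CT_eq_prod_superset[OF perm[OF \<open>A \<in> F\<close>]] by simp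
  qed
  finally show ?thesis .
qed

lemma prod_orbits_eq_prod_ncycles:
  assumes "perm_on D \<sigma>"
  shows "(\<Prod>A\<in>orbit_of \<sigma> ` D. R (card A)) = (\<Prod>i\<in>{1..card D}. (R i :: mpoly) ^ ncycles D \<sigma> i)"
proof -
  interpret perm_on D \<sigma> by fact
  have "card ` orbit_of \<sigma> ` D \<subseteq> {1..card D}"
    using card_orbit_pos card_mono[OF fin orbit_subset] by (auto simp: Suc_le_eq)
  then have "(\<Prod>A\<in>orbit_of \<sigma> ` D. R (card A))
      = (\<Prod>i\<in>{1..card D}. \<Prod>A\<in>{A \<in> orbit_of \<sigma> ` D. card A = i}. R (card A))"
    by (intro prod.group[symmetric]) (use fin in auto)
  also have "\<dots> = (\<Prod>i\<in>{1..card D}. R i ^ ncycles D \<sigma> i)"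
  proof (rule prod.cong[OF refl])
    fix i
    have "{A \<in> orbit_of \<sigma> ` D. card A = i} = {orbit_of \<sigma> x | x. x \<in> D \<and> card (orbit_of \<sigma> x) = i}"
      by auto
    moreover have "(\<Prod>A\<in>{A \<in> orbit_of \<sigma> ` D. card A = i}. R (card A))
        = (\<Prod>A\<in>{A \<in> orbit_of \<sigma> ` D. card A = i}. R i)"
      by (rule prod.cong) auto
    ultimately show "(\<Prod>A\<in>{A \<in> orbit_of \<sigma> ` D. card A = i}. R (card A)) = R i ^ ncycles D \<sigma> i"
      by (simp add: ncycles_def)
  qed
  finally show ?thesis .
qed

lemma CT_eq_CI_pow:
  assumes "card A = card Z * l" "l > 0"
    and ncycles: "\<And>s. s > 0 \<Longrightarrow> ncycles A f s = (if l dvd s then ncycles Z h (s div l) else 0)"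
  shows "CT A f = CI_pow l (CT Z h)"
proof -
  let ?N = "card Z"
  have "CT A f = (\<Prod>s\<in>{1..?N * l}. var s ^ ncycles A f s)"
    by (simp add: CT_def assms(1))
  also have "\<dots> = (\<Prod>s\<in>(\<lambda>k. k * l) ` {1..?N}. var s ^ ncycles A f s)"
  proof (rule prod.mono_neutral_right)
    show "(\<lambda>k. k * l) ` {1..?N} \<subseteq> {1..?N * l}"
      using assms(2) by auto
    show "\<forall>s\<in>{1..?N * l} - (\<lambda>k. k * l) ` {1..?N}. var s ^ ncycles A f s = 1"
    proof
      fix s assume s: "s \<in> {1..?N * l} - (\<lambda>k. k * l) ` {1..?N}"
      have "\<not> l dvd s"
      proof
        assume "l dvd s"
        then obtain k where "s = k * l"
          by (metis dvdE mult.commute)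
        moreover from this have "k \<in> {1..?N}"
          using s assms(2) by auto
        ultimately show False
          using s by blast
      qed
      then show "var s ^ ncycles A f s = 1"
        using ncycles s by simp
    qed
  qed simp
  also have "\<dots> = (\<Prod>k\<in>{1..?N}. var (k * l) ^ ncycles A f (k * l))"
    by (rule prod.reindex[unfolded comp_def]) (use assms(2) in \<open>auto intro: inj_onI\<close>)
  also have "\<dots> = (\<Prod>k\<in>{1..?N}. var (k * l) ^ ncycles Z h k)"
    using assms(2) by (intro prod.cong) (auto simp: ncycles)
  also have "\<dots> = CI_pow l (CT Z h)"
    by (simp add: CI_pow_CT)
  finally show ?thesis .
qed

lemma Min_orbit_in:
  fixes h :: "'a::linorder \<Rightarrow> 'a"
  assumes "perm_on S h" "x \<in> S"
  shows "Min (orbit_of h x) \<in> orbit_of h x"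
  using Min_in perm_on.finite_orbit[OF assms] perm_on.self_in_orbit[OF assms(1)] by blast

lemma orbit_Min_orbit:
  fixes h :: "'a::linorder \<Rightarrow> 'a"
  assumes "perm_on S h" "x \<in> S"
  shows "orbit_of h (Min (orbit_of h x)) = orbit_of h x"
  by (rule perm_on.orbit_eq[OF assms Min_orbit_in[OF assms]])

section \<open>The affine group of \<open>\<int>/m\<int>\<close>\<close>

lemma hol_map_inj:
  assumes "coprime a m" "x < m" "y < m" "hol_map m a b x = hol_map m a b y"
  shows "x = y"
proof -
  have "[a * x + b = a * y + b] (mod m)"
    using assms by (simp add: hol_map_def cong_def)
  then have "[x = y] (mod m)"
    using assms(1) by (simp add: cong_add_rcancel_nat cong_mult_lcancel_nat)
  then show ?thesis
    using assms(2,3) by (rule cong_less_modulus_unique_nat)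
qed

lemma Hol_permutes: assumes "h \<in> Hol m" shows "h permutes {0..<m}"
proof -
  obtain a b where h: "h = hol_map m a b" "coprime a m"
    using assms by (auto simp: Hol_def)
  have inj: "inj_on h {0..<m}"
    using hol_map_inj[OF h(2)] h(1) by (auto intro: inj_onI)
  moreover have "h ` {0..<m} \<subseteq> {0..<m}"
    using h(1) by (auto simp: hol_map_def)
  ultimately have "bij_betw h {0..<m} {0..<m}"
    by (simp add: bij_betw_def endo_inj_surj)
  moreover have "h x = x" if "x \<notin> {0..<m}" for x
    using that h(1) by (simp add: hol_map_def)
  ultimately show ?thesis
    by (rule bij_imp_permutes)
qed

lemma Hol_less: "h \<in> Hol m \<Longrightarrow> x < m \<Longrightarrow> h x < m"
  using permutes_in_image[OF Hol_permutes, of h m x] by simp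

lemma comp_in_Hol: assumes "h \<in> Hol m" "h' \<in> Hol m" shows "h \<circ> h' \<in> Hol m"
proof -
  obtain a b a' b' where h: "h = hol_map m a b" "coprime a m" "a < m" "b < m"
    and h': "h' = hol_map m a' b'" "coprime a' m" "a' < m" "b' < m"
    using assms by (auto simp: Hol_def)
  have "(a * ((a' * x + b') mod m) + b) mod m = ((a * a' mod m) * x + (a * b' + b) mod m) mod m" for x
  proof -
    have "(a * ((a' * x + b') mod m) + b) mod m = (a * (a' * x + b') + b) mod m"
      by (metis mod_add_left_eq mod_mult_right_eq)
    also have "\<dots> = ((a * a') * x + (a * b' + b)) mod m"
      by (simp add: algebra_simps)
    also have "\<dots> = ((a * a') * x mod m + (a * b' + b) mod m) mod m"
      by (rule mod_add_eq[symmetric])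
    also have "(a * a') * x mod m = (a * a' mod m) * x mod m"
      by (rule mod_mult_left_eq[symmetric])
    also have "((a * a' mod m) * x mod m + (a * b' + b) mod m) mod m
             = ((a * a' mod m) * x + (a * b' + b) mod m) mod m"
      by (rule mod_add_left_eq)
    finally show ?thesis .
  qed
  then have "h \<circ> h' = hol_map m (a * a' mod m) ((a * b' + b) mod m)"
    using h h' by (auto simp: hol_map_def)
  moreover have "coprime (a * a' mod m) m" "a * a' mod m < m" "(a * b' + b) mod m < m"
    using h h' by auto
  ultimately show ?thesis
    unfolding Hol_def by blast
qed

lemma id_in_Hol: assumes "m > 0" shows "id \<in> Hol m"
proof -
  have "id = hol_map m (1 mod m) 0"
    by (rule ext) (cases "m = 1"; simp add: hol_map_def)
  moreover have "coprime (1 mod m) m" "1 mod m < m"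
    using assms by (cases "m = 1"; simp)+
  ultimately show ?thesis
    using assms unfolding Hol_def by blast
qed

lemma finite_Hol: "finite (Hol m)"
proof -
  have "Hol m \<subseteq> (\<lambda>(a, b). hol_map m a b) ` ({0..<m} \<times> {0..<m})"
    by (auto simp: Hol_def)
  then show ?thesis
    by (rule finite_subset) auto
qed

lemma card_Hol_pos: "m > 0 \<Longrightarrow> card (Hol m) > 0"
  using id_in_Hol finite_Hol card_gt_0_iff by blast

lemma coprime_if_inj_on_hol_map:
  assumes "m > 0" and inj: "inj_on (hol_map m a b) {0..<m}"
  shows "coprime a m"
proof (rule ccontr)
  define g where "g = gcd a m"
  assume "\<not> coprime a m"
  then have "g \<noteq> 1"
    by (simp add: g_def coprime_iff_gcd_eq_1)
  moreover have "g > 0"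
    using assms(1) by (simp add: g_def)
  ultimately have "g \<ge> 2"
    by linarith
  obtain x where x: "m = g * x"
    unfolding g_def by (metis gcd_dvd2 dvdE)
  obtain a' where a': "a = g * a'"
    unfolding g_def by (metis gcd_dvd1 dvdE)
  have "0 < x"
    using x assms(1) by (auto intro: gr0I)
  then have "x < m"
    using \<open>g \<ge> 2\<close> x by (simp add: n_less_m_mult_n)
  have "a * x = a' * m"
    by (simp add: a' x)
  then have "hol_map m a b x = hol_map m a b 0"
    using \<open>x < m\<close> by (simp add: hol_map_def)
  then show False
    using inj_onD[OF inj, of x 0] \<open>0 < x\<close> \<open>x < m\<close> by simp
qed

section \<open>The wreath product \<open>W(d, m)\<close>\<close>

definition wreath_perm :: "nat \<Rightarrow> nat \<Rightarrow> (nat \<Rightarrow> nat) \<Rightarrow> (nat \<Rightarrow> nat \<Rightarrow> nat) \<Rightarrow> nat \<times> nat \<Rightarrow> nat \<times> nat" where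
  "wreath_perm d m \<sigma> g = (\<lambda>(x, i). if (x, i) \<in> W_carrier d m then (g (\<sigma> i) x, \<sigma> i) else (x, i))"

lemma W_eq: "W d m = {wreath_perm d m \<sigma> g | \<sigma> g. \<sigma> \<in> Sym d \<and> (\<forall>j<d. g j \<in> Hol m)}"
  by (simp add: W_def wreath_perm_def)

lemma wreath_perm_apply: "x < m \<Longrightarrow> i < d \<Longrightarrow> wreath_perm d m \<sigma> g (x, i) = (g (\<sigma> i) x, \<sigma> i)"
  by (simp add: wreath_perm_def W_carrier_def)

primrec fiber_walk :: "(nat \<Rightarrow> nat \<Rightarrow> nat) \<Rightarrow> (nat \<Rightarrow> nat) \<Rightarrow> nat \<Rightarrow> nat \<Rightarrow> nat \<Rightarrow> nat" where
  "fiber_walk g \<sigma> r 0 = id"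
| "fiber_walk g \<sigma> r (Suc n) = g ((\<sigma> ^^ Suc n) r) \<circ> fiber_walk g \<sigma> r n"

lemma fiber_walk_cong:
  "(\<And>k. k \<in> {1..n} \<Longrightarrow> g' ((\<sigma> ^^ k) r) = g ((\<sigma> ^^ k) r)) \<Longrightarrow> fiber_walk g' \<sigma> r n = fiber_walk g \<sigma> r n"
  by (induction n) (simp_all del: funpow.simps)

locale wreath_elem =
  fixes d m :: nat and \<sigma> :: "nat \<Rightarrow> nat" and g :: "nat \<Rightarrow> nat \<Rightarrow> nat"
  assumes m_pos: "m > 0" and \<sigma>: "\<sigma> permutes {0..<d}" and g: "\<And>j. j < d \<Longrightarrow> g j \<in> Hol m"
begin

abbreviation "w \<equiv> wreath_perm d m \<sigma> g"

lemma perm_on_\<sigma>: "perm_on {0..<d} \<sigma>"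
  using perm_on_permutes[OF _ \<sigma>] by simp

lemma funpow_\<sigma>_less: "r < d \<Longrightarrow> (\<sigma> ^^ n) r < d"
  using perm_on.funpow_in[OF perm_on_\<sigma>] by simp

lemma fiber_walk_in_Hol: "r < d \<Longrightarrow> fiber_walk g \<sigma> r n \<in> Hol m"
  by (induction n) (auto simp: id_in_Hol[OF m_pos] comp_in_Hol g funpow_\<sigma>_less simp del: funpow.simps)

lemma funpow_wreath_perm:
  "x < m \<Longrightarrow> r < d \<Longrightarrow> (w ^^ n) (x, r) = (fiber_walk g \<sigma> r n x, (\<sigma> ^^ n) r)"
  by (induction n) (auto simp: wreath_perm_apply Hol_less fiber_walk_in_Hol funpow_\<sigma>_less)

lemma wreath_perm_permutes: "w permutes W_carrier d m"
proof (rule bij_imp_permutes)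
  let ?C = "W_carrier d m"
  have "w ` ?C \<subseteq> ?C"
    by (auto simp: W_carrier_def wreath_perm_apply Hol_less g funpow_\<sigma>_less[of _ 1, simplified])
  moreover have "inj_on w ?C"
  proof (rule inj_onI)
    fix p q assume "p \<in> ?C" "q \<in> ?C" "w p = w q"
    then obtain x i y j where pq: "p = (x, i)" "q = (y, j)" "x < m" "i < d" "y < m" "j < d"
      "g (\<sigma> i) x = g (\<sigma> j) y" "\<sigma> i = \<sigma> j"
      by (cases p, cases q) (auto simp: W_carrier_def wreath_perm_apply)
    then have "i = j"
      using permutes_inj[OF \<sigma>] by (auto dest: injD)
    moreover have "g (\<sigma> i) permutes {0..<m}"
      using Hol_permutes g funpow_\<sigma>_less[OF pq(4), of 1] by simp
    ultimately show "p = q"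
      using pq permutes_inj by (auto dest: injD)
  qed
  moreover have "finite ?C"
    by (simp add: W_carrier_def)
  ultimately show "bij_betw w ?C ?C"
    by (simp add: bij_betw_def endo_inj_surj)
  show "\<And>x. x \<notin> ?C \<Longrightarrow> w x = x"
    by (auto simp: wreath_perm_def)
qed

lemma perm_on_block:
  assumes "r < d"
  shows "perm_on ({0..<m} \<times> orbit_of \<sigma> r) w"
proof
  have "orbit_of \<sigma> r \<subseteq> {0..<d}"
    using perm_on.orbit_subset[OF perm_on_\<sigma>] assms by simp
  then show "finite ({0..<m} \<times> orbit_of \<sigma> r)"
    using finite_subset by blast
  show "w p \<in> {0..<m} \<times> orbit_of \<sigma> r" if p: "p \<in> {0..<m} \<times> orbit_of \<sigma> r" for p
  proof -
    obtain x k where p: "p = (x, (\<sigma> ^^ k) r)" "x < m"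
      using p unfolding orbit_of_def by (cases p) auto
    have "(\<sigma> ^^ k) r < d" "(\<sigma> ^^ Suc k) r < d"
      using funpow_\<sigma>_less[OF assms] by blast+
    then have "w p = (g ((\<sigma> ^^ Suc k) r) x, (\<sigma> ^^ Suc k) r)" "g ((\<sigma> ^^ Suc k) r) x < m"
      using p wreath_perm_apply Hol_less g by auto
    then show ?thesis
      unfolding orbit_of_def by (metis SigmaI atLeast0LessThan lessThan_iff rangeI)
  qed
  show "inj_on w ({0..<m} \<times> orbit_of \<sigma> r)"
    using permutes_inj_on[OF wreath_perm_permutes] .
qed

end

locale wreath_block = wreath_elem +
  fixes r :: nat
  assumes r: "r < d"
begin

abbreviation "orb \<equiv> orbit_of \<sigma> r"
abbreviation "len \<equiv> card orb"
abbreviation "return_map \<equiv> fiber_walk g \<sigma> r len"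

lemma len_pos: "len > 0"
  using perm_on.card_orbit_pos[OF perm_on_\<sigma>] r by simp

lemma funpow_\<sigma>_eq_self_iff: "(\<sigma> ^^ n) r = r \<longleftrightarrow> len dvd n"
  using perm_on.funpow_eq_self_iff[OF perm_on_\<sigma>] r by simp

lemma orb_subset: "orb \<subseteq> {0..<d}"
  using perm_on.orbit_subset[OF perm_on_\<sigma>] r by simp

lemma perm_on_return_map: "perm_on {0..<m} return_map"
  by (rule perm_on_permutes[OF _ Hol_permutes[OF fiber_walk_in_Hol[OF r]]]) simp

lemma funpow_mult_len: "x < m \<Longrightarrow> (w ^^ (len * q)) (x, r) = ((return_map ^^ q) x, r)"
proof (induction q)
  case (Suc q)
  have "(return_map ^^ q) x < m"
    using perm_on.funpow_in[OF perm_on_return_map] Suc.prems by simp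
  then have "(w ^^ len) ((return_map ^^ q) x, r) = ((return_map ^^ Suc q) x, r)"
    using funpow_wreath_perm[OF _ r] funpow_\<sigma>_eq_self_iff by simp
  then show ?case
    using Suc by (simp add: funpow_add_apply[symmetric])
qed simp

lemma card_orbit_block:
  assumes x: "x < m"
  shows "card (orbit_of w (x, r)) = len * card (orbit_of return_map x)"
proof -
  let ?c = "card (orbit_of return_map x)"
  have fixed_iff: "(w ^^ n) (x, r) = (x, r) \<longleftrightarrow> len * ?c dvd n" for n
  proof (cases "len dvd n")
    case True
    then obtain q where n: "n = len * q" ..
    have "(w ^^ n) (x, r) = (x, r) \<longleftrightarrow> (return_map ^^ q) x = x"
      using funpow_mult_len[OF x] n by simp
    also have "\<dots> \<longleftrightarrow> ?c dvd q"
      using perm_on.funpow_eq_self_iff[OF perm_on_return_map] x by simp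
    finally show ?thesis
      using n len_pos by simp
  next
    case False
    then have "(w ^^ n) (x, r) \<noteq> (x, r)"
      using funpow_wreath_perm[OF x r] funpow_\<sigma>_eq_self_iff by simp
    moreover have "\<not> len * ?c dvd n"
      using False dvd_mult_left by blast
    ultimately show ?thesis
      by simp
  qed
  have "(x, r) \<in> {0..<m} \<times> orb"
    using x perm_on.self_in_orbit[OF perm_on_\<sigma>] by simp
  then have "card (orbit_of w (x, r)) dvd n \<longleftrightarrow> len * ?c dvd n" for n
    using perm_on.funpow_eq_self_iff[OF perm_on_block[OF r]] fixed_iff by simp
  then show ?thesis
    by (meson dvd_antisym dvd_refl)
qed

lemma card_fiber_eq:
  assumes "j \<in> orb"
  shows "card {x \<in> {0..<m}. card (orbit_of w (x, j)) = s} = card {x \<in> {0..<m}. card (orbit_of w (x, r)) = s}"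
proof -
  obtain t where t: "j = (\<sigma> ^^ t) r"
    using assms unfolding orbit_of_def by blast
  define \<phi> where "\<phi> = fiber_walk g \<sigma> r t"
  have \<phi>: "\<phi> permutes {0..<m}"
    unfolding \<phi>_def by (rule Hol_permutes[OF fiber_walk_in_Hol[OF r]])
  have orb_eq: "orbit_of w (\<phi> x, j) = orbit_of w (x, r)" if "x < m" for x
    using perm_on.orbit_funpow[OF perm_on_block[OF r], of "(x, r)" t] that
      funpow_wreath_perm[OF that r, of t] perm_on.self_in_orbit[OF perm_on_\<sigma>]
    by (simp add: \<phi>_def t)
  have "{x \<in> {0..<m}. card (orbit_of w (x, j)) = s} = \<phi> ` {x \<in> {0..<m}. card (orbit_of w (x, r)) = s}"
  proof (intro equalityI subsetI)
    fix y assume y: "y \<in> {x \<in> {0..<m}. card (orbit_of w (x, j)) = s}"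
    then obtain x where "x < m" "y = \<phi> x"
      using permutes_image[OF \<phi>] by (metis (no_types, lifting) atLeastLessThan_iff imageE mem_Collect_eq)
    then show "y \<in> \<phi> ` {x \<in> {0..<m}. card (orbit_of w (x, r)) = s}"
      using y orb_eq by auto
  qed (use orb_eq permutes_in_image[OF \<phi>] in auto)
  then show ?thesis
    by (simp add: card_image permutes_inj_on[OF \<phi>])
qed

lemma ncycles_block:
  assumes "s > 0"
  shows "ncycles ({0..<m} \<times> orb) w s = (if len dvd s then ncycles {0..<m} return_map (s div len) else 0)"
proof -
  let ?P = "\<lambda>p. card (orbit_of w p) = s"
  have "ncycles ({0..<m} \<times> orb) w s * s = card {p \<in> {0..<m} \<times> orb. ?P p}"
    by (rule perm_on.ncycles_mult_eq_card[OF perm_on_block[OF r]])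
  also have "{p \<in> {0..<m} \<times> orb. ?P p} = (\<lambda>(j, x). (x, j)) ` (SIGMA j:orb. {x \<in> {0..<m}. ?P (x, j)})"
    by auto
  also have "card \<dots> = (\<Sum>j\<in>orb. card {x \<in> {0..<m}. ?P (x, j)})"
    using finite_subset[OF orb_subset] by (subst card_image) (auto intro: inj_onI)
  also have "\<dots> = len * card {x \<in> {0..<m}. ?P (x, r)}"
    using card_fiber_eq by simp
  also have "{x \<in> {0..<m}. ?P (x, r)} = {x \<in> {0..<m}. len * card (orbit_of return_map x) = s}"
    using card_orbit_block by auto
  finally have count: "ncycles ({0..<m} \<times> orb) w s * s
      = len * card {x \<in> {0..<m}. len * card (orbit_of return_map x) = s}" .
  show ?thesis
  proof (cases "len dvd s")
    case True
    then obtain k where s: "s = len * k" ..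
    then have "{x \<in> {0..<m}. len * card (orbit_of return_map x) = s} = {x \<in> {0..<m}. card (orbit_of return_map x) = k}"
      using len_pos by auto
    then have "ncycles ({0..<m} \<times> orb) w s * s = len * (ncycles {0..<m} return_map k * k)"
      using count perm_on.ncycles_mult_eq_card[OF perm_on_return_map, of k] by simp
    also have "\<dots> = ncycles {0..<m} return_map k * s"
      using s by simp
    finally show ?thesis
      using True s assms len_pos by simp
  next
    case False
    then have "{x \<in> {0..<m}. len * card (orbit_of return_map x) = s} = {}"
      by auto
    then have "ncycles ({0..<m} \<times> orb) w s * s = 0"
      using count by simp
    then show ?thesis
      using False assms by simp
  qed
qed

lemma CT_block: "CT ({0..<m} \<times> orb) w = CI_pow len (CT {0..<m} return_map)"
  by (rule CT_eq_CI_pow) (simp_all add: card_cartesian_product len_pos ncycles_block)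

end

context wreath_elem
begin

lemma CT_wreath_perm:
  "CT (W_carrier d m) w = (\<Prod>A\<in>orbit_of \<sigma> ` {0..<d}.
      CI_pow (card A) (CT {0..<m} (fiber_walk g \<sigma> (Min A) (card A))))"
proof -
  interpret \<sigma>: perm_on "{0..<d}" \<sigma>
    by (rule perm_on_\<sigma>)
  define Orbs where "Orbs = orbit_of \<sigma> ` {0..<d}"
  define F where "F = (\<lambda>A. {0..<m} \<times> A) ` Orbs"
  have "\<Union>F = W_carrier d m"
    using \<sigma>.orbit_subset \<sigma>.self_in_orbit by (fastforce simp: F_def Orbs_def W_carrier_def)
  moreover have "pairwise disjnt F"
    using \<sigma>.orbits_disjoint unfolding F_def Orbs_def pairwise_def disjnt_def by fastforce
  moreover have "perm_on B w" if "B \<in> F" for B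
    using that perm_on_block by (auto simp: F_def Orbs_def)
  ultimately have "CT (W_carrier d m) w = (\<Prod>B\<in>F. CT B w)"
    using CT_Union[of F w] by (simp add: F_def Orbs_def)
  also have "\<dots> = (\<Prod>A\<in>Orbs. CT ({0..<m} \<times> A) w)"
    unfolding F_def
  proof (rule prod.reindex[unfolded comp_def], rule inj_onI)
    fix A B assume "{0..<m} \<times> A = {0..<m} \<times> B"
    then show "A = B"
      using m_pos by (auto simp: Times_eq_cancel2)
  qed
  also have "\<dots> = (\<Prod>A\<in>Orbs. CI_pow (card A) (CT {0..<m} (fiber_walk g \<sigma> (Min A) (card A))))"
  proof (rule prod.cong[OF refl])
    fix A assume "A \<in> Orbs"
    then obtain a where a: "a < d" "A = orbit_of \<sigma> a"
      by (auto simp: Orbs_def)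
    then have "Min A < d" "orbit_of \<sigma> (Min A) = A"
      using Min_orbit_in[OF perm_on_\<sigma>] orbit_Min_orbit[OF perm_on_\<sigma>] \<sigma>.orbit_subset by force+
    then show "CT ({0..<m} \<times> A) w = CI_pow (card A) (CT {0..<m} (fiber_walk g \<sigma> (Min A) (card A)))"
      using wreath_block.CT_block[of d m \<sigma> g "Min A"] wreath_elem_axioms
      by (simp add: wreath_block_def wreath_block_axioms_def)
  qed
  finally show ?thesis
    by (simp add: Orbs_def)
qed

end

lemma sum_PiE_prod_subset:
  fixes F :: "'a \<Rightarrow> 'b \<Rightarrow> 'c::comm_semiring_1"
  assumes "finite D" "R \<subseteq> D" "finite H"
  shows "(\<Sum>g\<in>PiE D (\<lambda>_. H). \<Prod>j\<in>R. F j (g j)) = of_nat (card H) ^ card (D - R) * (\<Prod>j\<in>R. \<Sum>h\<in>H. F j h)"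
proof -
  define F' where "F' j = (if j \<in> R then F j else (\<lambda>_. 1))" for j
  have "(\<Sum>g\<in>PiE D (\<lambda>_. H). \<Prod>j\<in>R. F j (g j)) = (\<Sum>g\<in>PiE D (\<lambda>_. H). \<Prod>j\<in>D. F' j (g j))"
    by (intro sum.cong refl prod.mono_neutral_cong_left) (use assms in \<open>auto simp: F'_def\<close>)
  also have "\<dots> = (\<Prod>j\<in>D. \<Sum>h\<in>H. F' j h)"
    by (rule prod_sum_PiE[symmetric]) (use assms in auto)
  also have "\<dots> = (\<Prod>j\<in>R. \<Sum>h\<in>H. F' j h) * (\<Prod>j\<in>D - R. \<Sum>h\<in>H. F' j h)"
    using prod.subset_diff[OF assms(2,1)] by (simp add: mult.commute)
  also have "\<dots> = (\<Prod>j\<in>R. \<Sum>h\<in>H. F j h) * (\<Prod>j\<in>D - R. of_nat (card H))"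
    by (intro arg_cong2[where f = "(*)"] prod.cong) (auto simp: F'_def)
  finally show ?thesis
    by (simp add: mult.commute)
qed

locale wreath_top =
  fixes d m :: nat and \<sigma> :: "nat \<Rightarrow> nat"
  assumes m_pos: "m > 0" and \<sigma>: "\<sigma> permutes {0..<d}"
begin

abbreviation "Hol_tuples \<equiv> PiE {0..<d} (\<lambda>_. Hol m)"

definition reps :: "nat set" where
  "reps = Min ` orbit_of \<sigma> ` {0..<d}"

lemma perm_on_\<sigma>: "perm_on {0..<d} \<sigma>"
  using perm_on_permutes[OF _ \<sigma>] by simp

lemma wreath_elem: "g \<in> Hol_tuples \<Longrightarrow> wreath_elem d m \<sigma> g"
  by unfold_locales (use m_pos \<sigma> in auto)

lemma reps_subset: "reps \<subseteq> {0..<d}"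
  using Min_orbit_in[OF perm_on_\<sigma>] perm_on.orbit_subset[OF perm_on_\<sigma>] by (fastforce simp: reps_def)

lemma mem_reps_iff: "j < d \<Longrightarrow> j \<in> reps \<longleftrightarrow> Min (orbit_of \<sigma> j) = j"
proof
  assume "j < d" "j \<in> reps"
  then obtain a where "a < d" "j = Min (orbit_of \<sigma> a)"
    by (auto simp: reps_def)
  then show "Min (orbit_of \<sigma> j) = j"
    using orbit_Min_orbit[OF perm_on_\<sigma>, of a] by simp
next
  assume "j < d" "Min (orbit_of \<sigma> j) = j"
  then show "j \<in> reps"
    unfolding reps_def by (metis atLeastLessThan_iff image_eqI zero_le)
qed

lemma prod_orbits_eq_prod_reps:
  "(\<Prod>A\<in>orbit_of \<sigma> ` {0..<d}. F A) = (\<Prod>j\<in>reps. F (orbit_of \<sigma> j))"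
proof -
  have orbit_Min: "orbit_of \<sigma> (Min A) = A" if "A \<in> orbit_of \<sigma> ` {0..<d}" for A
    using that orbit_Min_orbit[OF perm_on_\<sigma>] by auto
  then have "inj_on Min (orbit_of \<sigma> ` {0..<d})"
    by (metis inj_onI)
  then show ?thesis
    unfolding reps_def by (simp add: prod.reindex orbit_Min cong: prod.cong)
qed

lemma funpow_notin_reps:
  assumes j: "j \<in> reps" and k: "0 < k" "k < card (orbit_of \<sigma> j)"
  shows "(\<sigma> ^^ k) j \<in> {0..<d} - reps"
proof -
  interpret perm_on "{0..<d}" \<sigma>
    by (rule perm_on_\<sigma>)
  have jd: "j \<in> {0..<d}" and kd: "(\<sigma> ^^ k) j \<in> {0..<d}"
    using j reps_subset funpow_in by blast+
  have "(\<sigma> ^^ k) j \<noteq> j"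
    using funpow_eq_self_iff[OF jd, of k] k by (auto dest: dvd_imp_le)
  then have "(\<sigma> ^^ k) j \<notin> reps"
    using orbit_funpow[OF jd, of k] mem_reps_iff j jd kd by auto
  then show ?thesis
    using kd by simp
qed

definition cycle_products :: "(nat \<Rightarrow> nat \<Rightarrow> nat) \<Rightarrow> nat \<Rightarrow> nat \<Rightarrow> nat" where
  "cycle_products g = restrict (\<lambda>j. if j \<in> reps then fiber_walk g \<sigma> j (card (orbit_of \<sigma> j)) else g j) {0..<d}"

lemma fiber_walk_card_orbit:
  assumes "j < d"
  shows "fiber_walk g \<sigma> j (card (orbit_of \<sigma> j)) = g j \<circ> fiber_walk g \<sigma> j (card (orbit_of \<sigma> j) - 1)"
proof -
  let ?l = "card (orbit_of \<sigma> j)"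
  have "?l = Suc (?l - 1)" "(\<sigma> ^^ ?l) j = j"
    using perm_on.card_orbit_pos[OF perm_on_\<sigma>] perm_on.funpow_eq_self_iff[OF perm_on_\<sigma>] assms by auto
  then show ?thesis
    by (metis fiber_walk.simps(2))
qed

lemma cycle_products_in: "g \<in> Hol_tuples \<Longrightarrow> cycle_products g \<in> Hol_tuples"
  using wreath_elem.fiber_walk_in_Hol[OF wreath_elem] by (auto simp: cycle_products_def PiE_iff)

text \<open>On a \<open>\<sigma>\<close>-cycle with representative \<open>j\<close>, the cycle product determines \<open>g j\<close> once the other
  entries are fixed, because the remaining factor of the product is a permutation.\<close>

lemma inj_on_cycle_products: "inj_on cycle_products Hol_tuples"
proof (rule inj_onI)
  fix g g' assume g: "g \<in> Hol_tuples" and g': "g' \<in> Hol_tuples" and eq: "cycle_products g = cycle_products g'"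
  have non_reps: "g j = g' j" if "j \<in> {0..<d} - reps" for j
    using fun_cong[OF eq, of j] that by (simp add: cycle_products_def)
  show "g = g'"
  proof (rule PiE_ext[OF g g'])
    fix j assume jd: "j \<in> {0..<d}"
    show "g j = g' j"
    proof (cases "j \<in> reps")
      case True
      let ?l = "card (orbit_of \<sigma> j)"
      have "fiber_walk g' \<sigma> j (?l - 1) = fiber_walk g \<sigma> j (?l - 1)"
        by (rule fiber_walk_cong) (use non_reps funpow_notin_reps[OF True] in force)
      moreover have "fiber_walk g \<sigma> j ?l = fiber_walk g' \<sigma> j ?l"
        using fun_cong[OF eq, of j] True jd by (simp add: cycle_products_def)
      ultimately have "g j \<circ> fiber_walk g \<sigma> j (?l - 1) = g' j \<circ> fiber_walk g \<sigma> j (?l - 1)"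
        using fiber_walk_card_orbit jd by simp
      moreover have "surj (fiber_walk g \<sigma> j (?l - 1))"
        by (rule permutes_surj[OF Hol_permutes[OF wreath_elem.fiber_walk_in_Hol[OF wreath_elem[OF g]]]])
          (use jd in simp)
      ultimately show ?thesis
        by (metis surj_fun_eq)
    qed (use non_reps jd in simp)
  qed
qed

lemma cycle_products_image: "cycle_products ` Hol_tuples = Hol_tuples"
  by (rule endo_inj_surj[OF _ _ inj_on_cycle_products]) (use cycle_products_in finite_Hol in \<open>auto intro: finite_PiE\<close>)

lemma sum_CT_wreath_perm:
  "(\<Sum>g\<in>Hol_tuples. CT (W_carrier d m) (wreath_perm d m \<sigma> g))
    = of_nat (card (Hol m)) ^ d * (\<Prod>i\<in>{1..d}. CI_pow i (CI {0..<m} (Hol m)) ^ ncycles {0..<d} \<sigma> i)"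
proof -
  define f where "f j h = CI_pow (card (orbit_of \<sigma> j)) (CT {0..<m} h)" for j h
  define R where "R i = CI_pow i (CI {0..<m} (Hol m))" for i
  define N where "N = card (Hol m)"
  have "(\<Sum>g\<in>Hol_tuples. CT (W_carrier d m) (wreath_perm d m \<sigma> g))
      = (\<Sum>g\<in>Hol_tuples. \<Prod>j\<in>reps. f j (cycle_products g j))"
  proof (rule sum.cong[OF refl])
    fix g assume "g \<in> Hol_tuples"
    then have "CT (W_carrier d m) (wreath_perm d m \<sigma> g)
        = (\<Prod>j\<in>reps. CI_pow (card (orbit_of \<sigma> j)) (CT {0..<m} (fiber_walk g \<sigma> (Min (orbit_of \<sigma> j)) (card (orbit_of \<sigma> j)))))"
      using wreath_elem.CT_wreath_perm[OF wreath_elem] by (simp add: prod_orbits_eq_prod_reps)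
    also have "\<dots> = (\<Prod>j\<in>reps. f j (cycle_products g j))"
      using reps_subset mem_reps_iff by (intro prod.cong) (auto simp: f_def cycle_products_def)
    finally show "CT (W_carrier d m) (wreath_perm d m \<sigma> g) = (\<Prod>j\<in>reps. f j (cycle_products g j))" .
  qed
  also have "\<dots> = (\<Sum>g\<in>Hol_tuples. \<Prod>j\<in>reps. f j (g j))"
    using sum.reindex[OF inj_on_cycle_products, of "\<lambda>g. \<Prod>j\<in>reps. f j (g j)"]
    by (simp add: cycle_products_image comp_def)
  also have "\<dots> = of_nat N ^ card ({0..<d} - reps) * (\<Prod>j\<in>reps. \<Sum>h\<in>Hol m. f j h)"
    unfolding N_def by (rule sum_PiE_prod_subset[OF _ reps_subset finite_Hol]) simp
  also have "(\<Prod>j\<in>reps. \<Sum>h\<in>Hol m. f j h) = of_nat N ^ card reps * (\<Prod>j\<in>reps. R (card (orbit_of \<sigma> j)))"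
  proof -
    have "(\<Sum>h\<in>Hol m. f j h) = of_nat N * R (card (orbit_of \<sigma> j))" for j
      using sum_CI_pow_CT[OF finite_Hol] id_in_Hol[OF m_pos] by (auto simp: f_def R_def N_def)
    then show ?thesis
      by (simp add: prod.distrib)
  qed
  also have "(\<Prod>j\<in>reps. R (card (orbit_of \<sigma> j))) = (\<Prod>i\<in>{1..d}. R i ^ ncycles {0..<d} \<sigma> i)"
    using prod_orbits_eq_prod_reps[of "\<lambda>A. R (card A)"] prod_orbits_eq_prod_ncycles[OF perm_on_\<sigma>, of R]
    by simp
  finally have "(\<Sum>g\<in>Hol_tuples. CT (W_carrier d m) (wreath_perm d m \<sigma> g))
      = of_nat N ^ (card ({0..<d} - reps) + card reps) * (\<Prod>i\<in>{1..d}. R i ^ ncycles {0..<d} \<sigma> i)"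
    by (simp add: power_add mult_ac)
  moreover have "card ({0..<d} - reps) + card reps = d"
    using card_Diff_subset[OF finite_subset[OF reps_subset] reps_subset] card_mono[OF _ reps_subset] by simp
  ultimately show ?thesis
    by (simp add: N_def R_def)
qed

end

lemma wreath_perm_restrict:
  assumes "\<sigma> permutes {0..<d}"
  shows "wreath_perm d m \<sigma> (restrict g {0..<d}) = wreath_perm d m \<sigma> g"
proof (rule ext, clarify)
  fix x i
  show "wreath_perm d m \<sigma> (restrict g {0..<d}) (x, i) = wreath_perm d m \<sigma> g (x, i)"
    using permutes_in_image[OF assms, of i] by (simp add: wreath_perm_def W_carrier_def)
qed

lemma wreath_perm_inject_top:
  assumes "m > 0" "\<sigma> permutes {0..<d}" "\<sigma>' permutes {0..<d}"
    and eq: "wreath_perm d m \<sigma> g = wreath_perm d m \<sigma>' g'"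
  shows "\<sigma> = \<sigma>'"
proof
  fix i show "\<sigma> i = \<sigma>' i"
  proof (cases "i < d")
    case True
    then show ?thesis
      using fun_cong[OF eq, of "(0, i)"] \<open>m > 0\<close> by (simp add: wreath_perm_apply)
  next
    case False
    then show ?thesis
      using permutes_not_in[OF assms(2)] permutes_not_in[OF assms(3)] by simp
  qed
qed

lemma wreath_perm_inject_base:
  assumes \<sigma>: "\<sigma> permutes {0..<d}" and g: "g \<in> PiE {0..<d} (\<lambda>_. Hol m)" "g' \<in> PiE {0..<d} (\<lambda>_. Hol m)"
    and eq: "wreath_perm d m \<sigma> g = wreath_perm d m \<sigma> g'"
  shows "g = g'"
proof (rule PiE_ext[OF g])
  fix j assume j: "j \<in> {0..<d}"
  then obtain i where i: "i < d" "\<sigma> i = j"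
    using permutes_image[OF \<sigma>] by (metis atLeastLessThan_iff imageE)
  have perm: "g j permutes {0..<m}" "g' j permutes {0..<m}"
    using Hol_permutes PiE_mem[OF g(1) j] PiE_mem[OF g(2) j] by auto
  show "g j = g' j"
  proof
    fix x show "g j x = g' j x"
    proof (cases "x < m")
      case True
      then show ?thesis
        using fun_cong[OF eq, of "(x, i)"] i by (simp add: wreath_perm_apply)
    next
      case False
      then show ?thesis
        using permutes_not_in[OF perm(1)] permutes_not_in[OF perm(2)] by simp
    qed
  qed
qed

lemma W_eq_image: "W d m = (\<lambda>(\<sigma>, g). wreath_perm d m \<sigma> g) ` (Sym d \<times> PiE {0..<d} (\<lambda>_. Hol m))"
proof (intro equalityI subsetI)
  fix w assume "w \<in> W d m"
  then obtain \<sigma> g where w: "w = wreath_perm d m \<sigma> g" "\<sigma> \<in> Sym d" "\<forall>j<d. g j \<in> Hol m"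
    by (auto simp: W_eq)
  then have "w = wreath_perm d m \<sigma> (restrict g {0..<d})" "restrict g {0..<d} \<in> PiE {0..<d} (\<lambda>_. Hol m)"
    using wreath_perm_restrict[of \<sigma> d m g] by (auto simp: Sym_def)
  then show "w \<in> (\<lambda>(\<sigma>, g). wreath_perm d m \<sigma> g) ` (Sym d \<times> PiE {0..<d} (\<lambda>_. Hol m))"
    using w(2) by (intro image_eqI[where x = "(\<sigma>, restrict g {0..<d})"]) simp_all
next
  fix w assume "w \<in> (\<lambda>(\<sigma>, g). wreath_perm d m \<sigma> g) ` (Sym d \<times> PiE {0..<d} (\<lambda>_. Hol m))"
  then obtain \<sigma> g where "w = wreath_perm d m \<sigma> g" "\<sigma> \<in> Sym d" "g \<in> PiE {0..<d} (\<lambda>_. Hol m)"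
    by auto
  then have "w = wreath_perm d m \<sigma> g" "\<sigma> \<in> Sym d" "\<forall>j<d. g j \<in> Hol m"
    by auto
  then show "w \<in> W d m"
    unfolding W_eq by blast
qed

lemma bij_betw_wreath_perm:
  assumes "m > 0"
  shows "bij_betw (\<lambda>(\<sigma>, g). wreath_perm d m \<sigma> g) (Sym d \<times> PiE {0..<d} (\<lambda>_. Hol m)) (W d m)"
proof (rule bij_betw_imageI[OF _ W_eq_image[symmetric]], rule inj_onI, clarify)
  fix \<sigma> g \<sigma>' g'
  assume \<sigma>: "\<sigma> \<in> Sym d" "\<sigma>' \<in> Sym d"
    and g: "g \<in> PiE {0..<d} (\<lambda>_. Hol m)" "g' \<in> PiE {0..<d} (\<lambda>_. Hol m)"
    and eq: "wreath_perm d m \<sigma> g = wreath_perm d m \<sigma>' g'"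
  have "\<sigma> = \<sigma>'"
    using wreath_perm_inject_top[OF assms _ _ eq] \<sigma> by (simp add: Sym_def)
  moreover have "g = g'"
    using wreath_perm_inject_base[OF _ g] eq \<sigma> \<open>\<sigma> = \<sigma>'\<close> by (simp add: Sym_def)
  ultimately show "\<sigma> = \<sigma>' \<and> g = g'"
    by simp
qed

theorem CI_W:
  assumes "m > 0"
  shows "CI (W_carrier d m) (W d m) = subst (CI {0..<d} (Sym d)) (\<lambda>j. CI_pow j (CI {0..<m} (Hol m)))"
proof -
  define N where "N = card (Hol m)"
  define R where "R = (\<lambda>j. CI_pow j (CI {0..<m} (Hol m)))"
  define T where "T \<sigma> = (\<Prod>i\<in>{1..d}. R i ^ ncycles {0..<d} \<sigma> i)" for \<sigma>
  have card_Sym: "card (Sym d) = fact d"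
    unfolding Sym_def by (rule card_permutations) auto
  have "card (W d m) = fact d * N ^ d"
    using bij_betw_same_card[OF bij_betw_wreath_perm[OF assms, of d]]
    by (simp add: card_cartesian_product card_Sym card_PiE N_def)
  moreover have "(\<Sum>w\<in>W d m. CT (W_carrier d m) w) = of_nat N ^ d * (\<Sum>\<sigma>\<in>Sym d. T \<sigma>)"
  proof -
    have "(\<Sum>w\<in>W d m. CT (W_carrier d m) w)
        = (\<Sum>p\<in>Sym d \<times> PiE {0..<d} (\<lambda>_. Hol m). CT (W_carrier d m) ((\<lambda>(\<sigma>, g). wreath_perm d m \<sigma> g) p))"
      by (rule sum.reindex_bij_betw[OF bij_betw_wreath_perm[OF assms], symmetric])
    also have "\<dots> = (\<Sum>(\<sigma>, g)\<in>Sym d \<times> PiE {0..<d} (\<lambda>_. Hol m). CT (W_carrier d m) (wreath_perm d m \<sigma> g))"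
      by (intro sum.cong) auto
    also have "\<dots> = (\<Sum>\<sigma>\<in>Sym d. \<Sum>g\<in>PiE {0..<d} (\<lambda>_. Hol m). CT (W_carrier d m) (wreath_perm d m \<sigma> g))"
      by (rule sum.cartesian_product[symmetric])
    also have "\<dots> = (\<Sum>\<sigma>\<in>Sym d. of_nat N ^ d * T \<sigma>)"
    proof (rule sum.cong[OF refl])
      fix \<sigma> assume "\<sigma> \<in> Sym d"
      then interpret wreath_top d m \<sigma>
        using assms by unfold_locales (simp_all add: Sym_def)
      show "(\<Sum>g\<in>Hol_tuples. CT (W_carrier d m) (wreath_perm d m \<sigma> g)) = of_nat N ^ d * T \<sigma>"
        by (simp add: sum_CT_wreath_perm N_def T_def R_def)
    qed
    finally show ?thesis
      by (simp add: sum_distrib_left)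
  qed
  ultimately have "CI (W_carrier d m) (W d m)
      = const (1 / of_nat (fact d)) * (const (1 / of_nat (N ^ d)) * of_nat (N ^ d)) * (\<Sum>\<sigma>\<in>Sym d. T \<sigma>)"
    by (simp add: CI_def mult_ac flip: const_mult)
  also have "\<dots> = const (1 / of_nat (fact d)) * (\<Sum>\<sigma>\<in>Sym d. T \<sigma>)"
    using const_inverse_of_nat_mult[of "N ^ d"] card_Hol_pos[OF assms] by (simp add: N_def)
  also have "\<dots> = subst (CI {0..<d} (Sym d)) R"
    by (simp add: CI_def subst_mult subst_sum subst_CT card_Sym T_def)
  finally show ?thesis
    unfolding R_def .
qed

section \<open>The group \<open>GCP(d, q)\<close>\<close>

lemma mod_mult_add_less:
  fixes j d x m :: nat
  assumes "j < d"
  shows "(j + d * x) mod (d * m) = j + d * (x mod m)"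
  using assms by (simp add: mod_mult2_eq)

lemma bij_betw_skew_map:
  fixes G :: "nat \<Rightarrow> nat \<Rightarrow> nat"
  assumes inj: "inj_on (\<lambda>(t, i). (G i t, \<sigma> i)) ({0..<m} \<times> {0..<d})"
    and maps: "\<And>t i. t < m \<Longrightarrow> i < d \<Longrightarrow> G i t < m \<and> \<sigma> i < d" and "m > 0"
  shows "bij_betw \<sigma> {0..<d} {0..<d}" and "\<And>i. i < d \<Longrightarrow> inj_on (G i) {0..<m}"
proof -
  let ?F = "\<lambda>(t, i). (G i t, \<sigma> i)"
  have F_surj: "?F ` ({0..<m} \<times> {0..<d}) = {0..<m} \<times> {0..<d}"
    by (rule endo_inj_surj[OF _ _ inj]) (auto simp: maps)
  have "{0..<d} \<subseteq> \<sigma> ` {0..<d}"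
  proof
    fix j assume "j \<in> {0..<d}"
    then have "(0, j) \<in> ?F ` ({0..<m} \<times> {0..<d})"
      using \<open>m > 0\<close> F_surj by simp
    then obtain t i where "t < m" "i < d" "(0, j) = (G i t, \<sigma> i)"
      by auto
    then show "j \<in> \<sigma> ` {0..<d}"
      by auto
  qed
  moreover have "\<sigma> ` {0..<d} \<subseteq> {0..<d}"
    using maps \<open>m > 0\<close> by auto
  ultimately show "bij_betw \<sigma> {0..<d} {0..<d}"
    by (simp add: bij_betw_def eq_card_imp_inj_on subset_antisym)
  show "inj_on (G i) {0..<m}" if "i < d" for i
  proof (rule inj_onI)
    fix t t' assume "t \<in> {0..<m}" "t' \<in> {0..<m}" "G i t = G i t'"
    then show "t = t'"
      using inj_onD[OF inj, of "(t, i)" "(t', i)"] that by simp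
  qed
qed

locale primitive_root_field =
  fixes \<omega> :: "'a::{finite,field}" and n :: nat
  assumes prim: "primitive_root \<omega>" and n_def: "n = card (UNIV :: 'a set) - 1"
begin

abbreviation "U \<equiv> (UNIV :: 'a set) - {0}"

lemma card_U: "card U = n"
  by (simp add: card_Diff_singleton n_def)

lemma n_pos: "n > 0"
proof -
  have "card {0, 1::'a} \<le> card (UNIV :: 'a set)"
    by (rule card_mono) simp_all
  then show ?thesis
    by (simp add: n_def)
qed

lemma \<omega>_nonzero: "\<omega> \<noteq> 0"
  using prim by (simp add: primitive_root_def)

text \<open>Multiplication by \<open>\<omega>\<close> permutes \<open>U\<close> in a single cycle, so the cycle machinery
  gives the order of \<open>\<omega>\<close>.\<close>

lemma power_eq_1_iff: "\<omega> ^ k = 1 \<longleftrightarrow> n dvd k"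
proof -
  interpret perm_on U "(*) \<omega>"
    by unfold_locales (auto simp: \<omega>_nonzero inj_on_def)
  have pow: "((*) \<omega> ^^ k) 1 = \<omega> ^ k" for k
    by (induction k) auto
  have "orbit_of ((*) \<omega>) 1 = U"
    using prim \<omega>_nonzero by (auto simp: orbit_of_def pow primitive_root_def)
  then show ?thesis
    using funpow_eq_self_iff[of 1 k] by (simp add: pow card_U)
qed

lemma power_mod: "\<omega> ^ e = \<omega> ^ (e mod n)"
proof -
  have "\<omega> ^ e = \<omega> ^ (e mod n) * (\<omega> ^ n) ^ (e div n)"
    by (metis mod_mult_div_eq power_add power_mult)
  moreover have "\<omega> ^ n = 1"
    using power_eq_1_iff by simp
  ultimately show ?thesis
    by simp
qed

lemma power_image: "(\<lambda>k. \<omega> ^ k) ` {0..<n} = U"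
proof
  show "(\<lambda>k. \<omega> ^ k) ` {0..<n} \<subseteq> U"
    using \<omega>_nonzero by auto
  show "U \<subseteq> (\<lambda>k. \<omega> ^ k) ` {0..<n}"
  proof
    fix y assume "y \<in> U"
    then obtain k :: nat where "y = \<omega> ^ (k mod n)"
      using prim power_mod by (auto simp: primitive_root_def)
    then show "y \<in> (\<lambda>k. \<omega> ^ k) ` {0..<n}"
      using n_pos by auto
  qed
qed

lemma inj_on_power: "inj_on (\<lambda>k. \<omega> ^ k) {0..<n}"
  by (rule eq_card_imp_inj_on) (simp_all add: power_image card_U)

end

locale gcp_coords = primitive_root_field +
  fixes d m :: nat
  assumes d_pos: "d > 0" and d_dvd: "d dvd n" and m_def: "m = n div d"
begin

abbreviation "C \<equiv> W_carrier d m"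

lemma n_eq: "n = d * m"
  using d_dvd by (simp add: m_def)

lemma m_pos: "m > 0"
  using n_pos n_eq by (cases "m = 0") auto

text \<open>The coordinates identify \<open>\<omega>\<^sup>i C\<close>, the \<open>i\<close>-th coset of the index \<open>d\<close> subgroup, with the
  \<open>i\<close>-th block of \<open>\<int>/m\<int> \<times> {0..<d}\<close>, the element \<open>\<omega>\<^sup>i (\<omega>\<^sup>k)\<^sup>d\<close> having coordinates \<open>(k mod m, i)\<close>.\<close>

definition coords :: "nat \<times> nat \<Rightarrow> 'a" where
  "coords p = \<omega> ^ (snd p + d * fst p)"

lemma power_eq_coords: "i < d \<Longrightarrow> \<omega> ^ (i + d * x) = coords (x mod m, i)"
  by (subst power_mod) (simp add: n_eq coords_def mod_mult_add_less)

lemma power_eq_coords_div_mod: "\<omega> ^ e = coords ((e div d) mod m, e mod d)"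
  using power_eq_coords[of "e mod d" "e div d"] d_pos by simp

lemma coords_in_U: "coords p \<in> U"
  using \<omega>_nonzero by (simp add: coords_def)

lemma inj_on_coords: "inj_on coords C"
proof (rule inj_onI)
  fix p q assume pq: "p \<in> C" "q \<in> C" "coords p = coords q"
  have "snd p + d * fst p < n" if "p \<in> C" for p
  proof -
    have "snd p + d * fst p < d + d * fst p"
      using that by (auto simp: W_carrier_def)
    also have "\<dots> \<le> d * m"
      using that by (auto simp: W_carrier_def Suc_le_eq simp flip: mult_Suc_right)
    finally show ?thesis
      by (simp add: n_eq)
  qed
  then have "snd p + d * fst p = snd q + d * fst q"
    using inj_onD[OF inj_on_power] pq by (simp add: coords_def)
  moreover have "snd p < d" "snd q < d"
    using pq by (auto simp: W_carrier_def)
  ultimately have "(snd p + d * fst p) mod d = (snd q + d * fst q) mod d"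
    "(snd p + d * fst p) div d = (snd q + d * fst q) div d"
    by simp_all
  then show "p = q"
    using \<open>snd p < d\<close> \<open>snd q < d\<close> d_pos by (simp add: prod_eq_iff)
qed

lemma bij_betw_coords: "bij_betw coords C U"
proof -
  have "U \<subseteq> coords ` C"
  proof
    fix y assume "y \<in> U"
    then obtain k :: nat where "y = \<omega> ^ k"
      using prim by (auto simp: primitive_root_def)
    moreover have "((k div d) mod m, k mod d) \<in> C"
      using d_pos m_pos by (simp add: W_carrier_def)
    ultimately show "y \<in> coords ` C"
      using power_eq_coords_div_mod by blast
  qed
  then show ?thesis
    using inj_on_coords coords_in_U by (auto simp: bij_betw_def)
qed

end

context gcp_coords
begin

definition transfer :: "(nat \<times> nat \<Rightarrow> nat \<times> nat) \<Rightarrow> 'a \<Rightarrow> 'a" where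
  "transfer w y = (if y = 0 then 0 else coords (w (inv_into C coords y)))"

lemma transfer_coords: "p \<in> C \<Longrightarrow> transfer w (coords p) = coords (w p)"
  using bij_betw_coords coords_in_U by (simp add: transfer_def bij_betw_def)

lemma transfer_0: "transfer w 0 = 0"
  by (simp add: transfer_def)

lemma W_permutes: "w \<in> W d m \<Longrightarrow> w permutes C"
  using wreath_elem.wreath_perm_permutes m_pos by (fastforce simp: W_eq Sym_def wreath_elem_def)

lemma transfer_permutes:
  assumes "w permutes C"
  shows "transfer w permutes U"
proof (rule bij_imp_permutes)
  have "bij_betw (coords \<circ> w \<circ> inv_into C coords) U U"
    using bij_betw_coords bij_betw_inv_into permutes_imp_bij[OF assms] by (blast intro: bij_betw_trans)
  then show "bij_betw (transfer w) U U"
    by (rule bij_betw_cong[THEN iffD1, rotated]) (simp add: transfer_def)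
qed (simp add: transfer_def)

lemma inj_on_transfer: "inj_on transfer (W d m)"
proof (rule inj_onI)
  fix w w' assume w: "w \<in> W d m" "w' \<in> W d m" and eq: "transfer w = transfer w'"
  show "w = w'"
  proof
    fix p show "w p = w' p"
    proof (cases "p \<in> C")
      case True
      then have "coords (w p) = coords (w' p)"
        using fun_cong[OF eq, of "coords p"] by (simp add: transfer_coords)
      then show ?thesis
        using inj_onD[OF bij_betw_imp_inj_on[OF bij_betw_coords]] True
          permutes_in_image[OF W_permutes[OF w(1)]] permutes_in_image[OF W_permutes[OF w(2)]] by blast
    next
      case False
      then show ?thesis
        using permutes_not_in[OF W_permutes[OF w(1)]] permutes_not_in[OF W_permutes[OF w(2)]] by simp
    qed
  qed
qed

lemma CT_transfer: "w \<in> W d m \<Longrightarrow> CT U (transfer w) = CT C w"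
  by (rule CT_conj[OF perm_on_permutes[OF _ W_permutes] bij_betw_coords])
    (auto simp: W_carrier_def transfer_coords)

lemma power_in_index_subgroup_form:
  assumes "c \<in> index_subgroup d"
  obtains t where "\<omega> ^ i * c = \<omega> ^ (i + d * t)"
proof -
  obtain y where "c = y ^ d" "y \<noteq> 0"
    using assms by (auto simp: index_subgroup_def)
  moreover obtain t :: nat where "y = \<omega> ^ t"
    using prim \<open>y \<noteq> 0\<close> by (auto simp: primitive_root_def)
  ultimately show ?thesis
    using that[of t] by (simp add: power_add mult.commute[of d t] flip: power_mult)
qed

lemma power_in_index_subgroup: "(\<omega> ^ t) ^ d \<in> index_subgroup d"
  using \<omega>_nonzero by (auto simp: index_subgroup_def)

lemma transfer_wreath_perm_power:
  assumes "\<sigma> permutes {0..<d}" "i < d" "g (\<sigma> i) = hol_map m a b"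
  shows "transfer (wreath_perm d m \<sigma> g) (\<omega> ^ (i + d * t)) = \<omega> ^ (\<sigma> i + d * (b + t * a))"
proof -
  have "\<sigma> i < d"
    using permutes_in_image[OF assms(1)] assms(2) by simp
  have "(a * (t mod m) + b) mod m = (a * t + b) mod m"
    by (rule mod_add_cong[OF mod_mult_right_eq refl])
  then have "(a * (t mod m) + b) mod m = (b + t * a) mod m"
    by (simp add: ac_simps)
  then show ?thesis
    using assms \<open>\<sigma> i < d\<close> m_pos
    by (simp add: power_eq_coords transfer_coords W_carrier_def wreath_perm_apply hol_map_def)
qed

lemma power_affine_form:
  "\<omega> ^ (s + d * (b + t * r)) = \<omega> ^ (s + d * b) / \<omega> ^ (r * i) * (\<omega> ^ (i + d * t)) ^ r"
proof -
  have "(\<omega> ^ (i + d * t)) ^ r = \<omega> ^ (r * i) * \<omega> ^ (d * (t * r))"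
    by (simp add: power_add algebra_simps flip: power_mult)
  then show ?thesis
    using \<omega>_nonzero by (simp add: power_add algebra_simps)
qed

lemma transfer_in_GCP:
  assumes w: "w \<in> W d m"
  shows "transfer w \<in> GCP d \<omega>"
proof -
  obtain \<sigma> g where ws: "w = wreath_perm d m \<sigma> g" "\<sigma> permutes {0..<d}" "\<And>j. j < d \<Longrightarrow> g j \<in> Hol m"
    using w by (auto simp: W_eq Sym_def)
  have "\<forall>j<d. \<exists>a b. g j = hol_map m a b \<and> a < m"
    using ws(3) unfolding Hol_def by blast
  then obtain A B where AB: "\<And>j. j < d \<Longrightarrow> g j = hol_map m (A j) (B j) \<and> A j < m"
    by metis
  have \<sigma>d: "\<sigma> i < d" if "i < d" for i
    using permutes_in_image[OF ws(2)] that by simp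
  txt \<open>The exponent \<open>A (\<sigma> i)\<close> only matters modulo \<open>m\<close>; \<open>r i\<close> is its representative in \<open>{1..m}\<close>.\<close>
  define r where "r i = (if A (\<sigma> i) = 0 then m else A (\<sigma> i))" for i
  define a where "a i = \<omega> ^ (\<sigma> i + d * B (\<sigma> i)) / \<omega> ^ (r i * i)" for i
  have "transfer w (\<omega> ^ i * c) = a i * (\<omega> ^ i * c) ^ r i" if i: "i < d" and c: "c \<in> index_subgroup d" for i c
  proof -
    obtain t where t: "\<omega> ^ i * c = \<omega> ^ (i + d * t)"
      using power_in_index_subgroup_form[OF c] .
    have "(B (\<sigma> i) + t * A (\<sigma> i)) mod m = (B (\<sigma> i) + t * r i) mod m"
      by (simp add: r_def mod_simps)
    then have "transfer w (\<omega> ^ i * c) = \<omega> ^ (\<sigma> i + d * (B (\<sigma> i) + t * r i))"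
      using transfer_wreath_perm_power[OF ws(2) i] AB[OF \<sigma>d[OF i]] \<sigma>d[OF i]
      by (simp add: t ws(1) power_eq_coords)
    also have "\<dots> = a i * (\<omega> ^ i * c) ^ r i"
      unfolding a_def t by (rule power_affine_form)
    finally show ?thesis .
  qed
  moreover have "r i \<in> {1..(card (UNIV :: 'a set) - 1) div d}" if "i < d" for i
    using AB[OF \<sigma>d[OF that]] m_pos by (auto simp: r_def m_def n_def)
  moreover have "bij (transfer w)"
    using permutes_bij[OF transfer_permutes[OF W_permutes[OF w]]] .
  ultimately show ?thesis
    unfolding GCP_def using transfer_0 by blast
qed

end

context gcp_coords
begin

lemma GCP_power_form:
  assumes "f \<in> GCP d \<omega>"
  obtains e r where "\<And>i t. i < d \<Longrightarrow> f (\<omega> ^ (i + d * t)) = \<omega> ^ (e i + d * (t * r i))"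
proof -
  obtain a r where "bij f" "f 0 = 0"
    and fa: "\<And>i c. i < d \<Longrightarrow> c \<in> index_subgroup d \<Longrightarrow> f (\<omega> ^ i * c) = a i * (\<omega> ^ i * c) ^ r i"
    using assms unfolding GCP_def by blast
  have f_power: "f (\<omega> ^ (i + d * t)) = a i * (\<omega> ^ (i + d * t)) ^ r i" if "i < d" for i t
    using fa[OF that power_in_index_subgroup[of t]]
    by (simp add: power_add mult.commute[of d t] flip: power_mult)
  have "a i \<noteq> 0" if "i < d" for i
  proof
    assume "a i = 0"
    then have "f (\<omega> ^ i) = f 0"
      using f_power[OF that, of 0] \<open>f 0 = 0\<close> by simp
    then have "\<omega> ^ i = 0"
      by (rule injD[OF bij_is_inj[OF \<open>bij f\<close>]])
    then show False
      using \<omega>_nonzero by simp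
  qed
  then have "\<forall>i<d. \<exists>k. a i = \<omega> ^ k"
    using prim by (auto simp: primitive_root_def)
  then obtain \<alpha> where \<alpha>: "\<And>i. i < d \<Longrightarrow> a i = \<omega> ^ \<alpha> i"
    by metis
  have "f (\<omega> ^ (i + d * t)) = \<omega> ^ ((\<alpha> i + r i * i) + d * (t * r i))" if "i < d" for i t
  proof -
    have "f (\<omega> ^ (i + d * t)) = \<omega> ^ (\<alpha> i + (i + d * t) * r i)"
      using f_power[OF that, of t] \<alpha>[OF that] by (simp add: power_add power_mult)
    also have "\<alpha> i + (i + d * t) * r i = (\<alpha> i + r i * i) + d * (t * r i)"
      by (simp add: algebra_simps)
    finally show ?thesis .
  qed
  then show ?thesis
    by (rule that)
qed

lemma GCP_skew_form:
  assumes "f \<in> GCP d \<omega>"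
  obtains \<sigma> a b where "\<And>i. \<sigma> i < d" "\<And>i. a i < m" "\<And>i. b i < m"
    "\<And>t i. t < m \<Longrightarrow> i < d \<Longrightarrow> f (coords (t, i)) = coords (hol_map m (a i) (b i) t, \<sigma> i)"
proof -
  obtain e r where er: "\<And>i t. i < d \<Longrightarrow> f (\<omega> ^ (i + d * t)) = \<omega> ^ (e i + d * (t * r i))"
    using GCP_power_form[OF assms] by blast
  have skew: "f (coords (t, i)) = coords (hol_map m (r i mod m) ((e i div d) mod m) t, e i mod d)"
    if "t < m" "i < d" for t i
  proof -
    have "(r i mod m * t + e i div d mod m) mod m = (r i * t + e i div d) mod m"
      by (rule mod_add_cong[OF mod_mult_left_eq mod_mod_trivial])
    then have "hol_map m (r i mod m) ((e i div d) mod m) t = (e i div d + t * r i) mod m"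
      using that by (simp add: hol_map_def ac_simps)
    moreover have "f (coords (t, i)) = \<omega> ^ (e i mod d + d * (e i div d + t * r i))"
      using er[OF that(2), of t] by (simp add: coords_def algebra_simps)
    ultimately show ?thesis
      using power_eq_coords[of "e i mod d"] d_pos by simp
  qed
  show ?thesis
    by (rule that[of "\<lambda>i. e i mod d" "\<lambda>i. r i mod m" "\<lambda>i. (e i div d) mod m"])
      (use skew d_pos m_pos in simp_all)
qed

lemma GCP_coords_form:
  assumes f: "f \<in> GCP d \<omega>"
  obtains \<sigma> G where "bij_betw \<sigma> {0..<d} {0..<d}" "\<And>i. i < d \<Longrightarrow> G i \<in> Hol m"
    "\<And>t i. t < m \<Longrightarrow> i < d \<Longrightarrow> f (coords (t, i)) = coords (G i t, \<sigma> i)"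
proof -
  obtain \<sigma> a b where \<sigma>: "\<And>i. \<sigma> i < d" and ab: "\<And>i. a i < m" "\<And>i. b i < m"
    and f_coords: "\<And>t i. t < m \<Longrightarrow> i < d \<Longrightarrow> f (coords (t, i)) = coords (hol_map m (a i) (b i) t, \<sigma> i)"
    using GCP_skew_form[OF f] by blast
  define G where "G i = hol_map m (a i) (b i)" for i
  have "inj_on (\<lambda>(t, i). (G i t, \<sigma> i)) C"
  proof (rule inj_onI)
    fix p q assume pq: "p \<in> C" "q \<in> C" "(\<lambda>(t, i). (G i t, \<sigma> i)) p = (\<lambda>(t, i). (G i t, \<sigma> i)) q"
    then have "f (coords p) = f (coords q)"
      using f_coords by (auto simp: W_carrier_def G_def)
    then have "coords p = coords q"
      using f unfolding GCP_def by (auto dest: bij_is_inj injD)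
    then show "p = q"
      using inj_onD[OF inj_on_coords] pq(1,2) by blast
  qed
  moreover have "G i t < m" if "t < m" for t i
    using that m_pos by (simp add: G_def hol_map_def)
  ultimately have bij: "bij_betw \<sigma> {0..<d} {0..<d}" and inj: "\<And>i. i < d \<Longrightarrow> inj_on (G i) {0..<m}"
    using bij_betw_skew_map[of G \<sigma> m d] \<sigma> m_pos by (simp_all add: W_carrier_def)
  have Hol: "G i \<in> Hol m" if "i < d" for i
  proof -
    have "coprime (a i) m"
      using coprime_if_inj_on_hol_map[OF m_pos] inj[OF that] by (simp add: G_def)
    then show ?thesis
      using ab unfolding Hol_def G_def by blast
  qed
  show ?thesis
    by (rule that[of \<sigma> G]) (use bij Hol f_coords in \<open>simp_all add: G_def\<close>)
qed

lemma GCP_subset_transfer_image: "GCP d \<omega> \<subseteq> transfer ` W d m"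
proof
  fix f assume f: "f \<in> GCP d \<omega>"
  obtain \<sigma> G where \<sigma>: "bij_betw \<sigma> {0..<d} {0..<d}" and G: "\<And>i. i < d \<Longrightarrow> G i \<in> Hol m"
    and f_coords: "\<And>t i. t < m \<Longrightarrow> i < d \<Longrightarrow> f (coords (t, i)) = coords (G i t, \<sigma> i)"
    using GCP_coords_form[OF f] by blast
  define \<sigma>' where "\<sigma>' i = (if i < d then \<sigma> i else i)" for i
  define g where "g j = G (inv_into {0..<d} \<sigma> j)" for j
  have \<sigma>': "\<sigma>' permutes {0..<d}"
  proof (rule bij_imp_permutes)
    show "bij_betw \<sigma>' {0..<d} {0..<d}"
      using \<sigma> by (rule bij_betw_cong[THEN iffD1, rotated]) (simp add: \<sigma>'_def)
  qed (simp add: \<sigma>'_def)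
  have g_\<sigma>: "g (\<sigma> i) = G i" if "i < d" for i
    using bij_betw_inv_into_left[OF \<sigma>] that by (simp add: g_def)
  have "g j \<in> Hol m" if "j < d" for j
    using G bij_betw_apply[OF bij_betw_inv_into[OF \<sigma>], of j] that by (simp add: g_def)
  then have w: "wreath_perm d m \<sigma>' g \<in> W d m"
    using \<sigma>' by (auto simp: W_eq Sym_def)
  have "transfer (wreath_perm d m \<sigma>' g) = f"
  proof
    fix y show "transfer (wreath_perm d m \<sigma>' g) y = f y"
    proof (cases "y = 0")
      case True
      then show ?thesis
        using f transfer_0 by (simp add: GCP_def)
    next
      case False
      then have "y \<in> coords ` C"
        using bij_betw_coords by (simp add: bij_betw_def)
      then obtain t i where "y = coords (t, i)" "t < m" "i < d"
        by (auto simp: W_carrier_def)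
      then show ?thesis
        using transfer_coords f_coords g_\<sigma> by (simp add: W_carrier_def wreath_perm_apply \<sigma>'_def)
    qed
  qed
  then show "f \<in> transfer ` W d m"
    using w by blast
qed

lemma GCP_eq_transfer_image: "GCP d \<omega> = transfer ` W d m"
  using GCP_subset_transfer_image transfer_in_GCP by blast

lemma CI_GCP_eq_CI_W: "CI U (GCP d \<omega>) = CI C (W d m)"
proof -
  have "(\<Sum>f\<in>GCP d \<omega>. CT U f) = (\<Sum>w\<in>W d m. CT C w)"
    unfolding GCP_eq_transfer_image by (simp add: sum.reindex[OF inj_on_transfer] CT_transfer)
  then show ?thesis
    unfolding CI_def GCP_eq_transfer_image by (simp add: card_image[OF inj_on_transfer])
qed

end

theorem proposition6p2:
  fixes d m :: nat and \<omega> :: "'a::{finite,field}"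
  assumes "0 < d" and "0 < m"
  shows "CI (W_carrier d m) (W d m) = subst (CI {0..<d} (Sym d)) (\<lambda>j. CI_pow j (CI {0..<m} (Hol m)))
    \<and> ((d dvd card (UNIV :: 'a set) - 1 \<and> primitive_root \<omega>) \<longrightarrow>
         CI (UNIV - {0}) (GCP d \<omega>) =
         subst (CI {0..<d} (Sym d)) (\<lambda>j. CI_pow j (CI {0..<(card (UNIV :: 'a set) - 1) div d} (Hol ((card (UNIV :: 'a set) - 1) div d)))))"
proof (intro conjI impI)
  show "CI (W_carrier d m) (W d m) = subst (CI {0..<d} (Sym d)) (\<lambda>j. CI_pow j (CI {0..<m} (Hol m)))"
    using CI_W[OF assms(2)] .
next
  assume "d dvd card (UNIV :: 'a set) - 1 \<and> primitive_root \<omega>"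
  then interpret gcp_coords \<omega> "card (UNIV :: 'a set) - 1" d "(card (UNIV :: 'a set) - 1) div d"
    using assms(1) by unfold_locales auto
  show "CI (UNIV - {0}) (GCP d \<omega>) =
      subst (CI {0..<d} (Sym d)) (\<lambda>j. CI_pow j (CI {0..<(card (UNIV :: 'a set) - 1) div d} (Hol ((card (UNIV :: 'a set) - 1) div d))))"
    using CI_GCP_eq_CI_W CI_W[OF m_pos] by simp
qed

end
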